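(* Let $\Omega\subset\mathbb{R}^d$ be a bounded open set, $q\ge1$ an integer, $\lambda\in\mathbb{R}\setminus\{0\}$, $k\in C^q(\overline{\Omega}\times\overline{\Omega})$ and $f\in C^q(\overline{\Omega})$ nonzero. Suppose $\lambda$ does not belong to the spectrum of $\mathcal{K}\colon C^0(\overline{\Omega})\to C^0(\overline{\Omega})$, $(\mathcal{K}v)(x)=\int_\Omega k(x,y)v(y)\,dy$, and let $u\in C^q(\overline{\Omega})$ be the solution of $\lambda u-\mathcal{K}u=f$. Let $\{(Y_h,\vec w_h)\}_{h>0}$ be a quadrature scheme of order $q$ which is stable. Then for all sufficiently small $h>0$ the linear system \[ \lambda\hat u_{h,i}-\sum_{j=1}^{|Y_h|}w_{h,j}k(y_{h,i},y_{h,j})\hat u_{h,j}=f(y_{h,i}),\quad i=1,\dots,|Y_h|, \] has a unique solution, the condition number of its system matrix $\lambda I_h-K_hW_h$ is bounded uniformly with respect to $h$, and there is a constant $C>0$ independent of $h$ and $u$ such that \[ \|u-u_h\|_\infty\le C h^q\|u\|_{C^q(\overline{\Omega})},\qquad\text{where } u_h(x)=\frac1\lambda\Big(\sum_{i=1}^{|Y_h|}w_{h,i}k(x,y_{h,i})\hat u_{h,i}+f(x)\Big). \]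
   Context: $C^q(\overline{\Omega})$ is the space of functions whose partial derivatives up to order $q$ exist on $\Omega$ and extend continuously to $\overline{\Omega}$, with norm $\|v\|_{C^q(\overline{\Omega})}=\sum_{|\alpha|\le q}\frac1{\alpha!}\max_{\overline\Omega}|\partial^\alpha v|$; $\|v\|_\infty=\max_{\overline\Omega}|v|$. A quadrature scheme is a family $\{(Y_h,\vec w_h)\}_{h>0}$ of finite sets $Y_h=\{y_{h,i}\}\subset\overline{\Omega}$ and weights $\vec w_h\in\mathbb{R}^{|Y_h|}$ with $|Y_h|\to\infty$ as $h\to0^+$. It has order $q$ if there is $C_w$ with $|\int_\Omega v-\sum_i w_{h,i}v(y_{h,i})|\le C_wh^q\|v\|_{C^q(\overline{\Omega})}$ for all $h>0$ and $v\in C^q(\overline{\Omega})$; it is stable if $\|\vec w_h\|_1\le C_Q$ for all $h>0$. $I_h$ is the identity of size $|Y_h|$, $(K_h)_{ij}=k(y_{h,i},y_{h,j})$, $W_h=\mathrm{diag}(\vec w_h)$. *)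

theory Defs
  imports "HOL-Analysis.Analysis"
begin

definition has_pd :: "'a::euclidean_space \<Rightarrow> ('a \<Rightarrow> real) \<Rightarrow> 'a \<Rightarrow> bool" where
  "has_pd b f x \<longleftrightarrow> (\<exists>D. ((\<lambda>t. f (x + t *\<^sub>R b)) has_real_derivative D) (at 0))"

definition pd :: "'a::euclidean_space \<Rightarrow> ('a \<Rightarrow> real) \<Rightarrow> 'a \<Rightarrow> real" where
  "pd b f x = deriv (\<lambda>t. f (x + t *\<^sub>R b)) 0"

fun pds :: "'a::euclidean_space list \<Rightarrow> ('a \<Rightarrow> real) \<Rightarrow> 'a \<Rightarrow> real" where
  "pds [] f = f"
| "pds (b # bs) f = pd b (pds bs f)"

fun pds_exist :: "'a::euclidean_space set \<Rightarrow> 'a list \<Rightarrow> ('a \<Rightarrow> real) \<Rightarrow> bool" where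
  "pds_exist \<Omega> [] f = True"
| "pds_exist \<Omega> (b # bs) f = (pds_exist \<Omega> bs f \<and> (\<forall>x\<in>\<Omega>. has_pd b (pds bs f) x))"

definition Cq :: "'a::euclidean_space set \<Rightarrow> nat \<Rightarrow> ('a \<Rightarrow> real) \<Rightarrow> bool" where
  "Cq \<Omega> q v \<longleftrightarrow> continuous_on (closure \<Omega>) v \<and>
     (\<forall>bs. set bs \<subseteq> Basis \<and> bs \<noteq> [] \<and> length bs \<le> q \<longrightarrow>
        pds_exist \<Omega> bs v \<and>
        (\<exists>g. continuous_on (closure \<Omega>) g \<and> (\<forall>x\<in>\<Omega>. g x = pds bs v x)))"

definition multi_idx :: "nat \<Rightarrow> ('a::euclidean_space \<Rightarrow> nat) set" where
  "multi_idx q = {\<alpha>. (\<forall>b. b \<notin> Basis \<longrightarrow> \<alpha> b = 0) \<and> (\<Sum>b\<in>Basis. \<alpha> b) \<le> q}"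

definition mi_fact :: "('a::euclidean_space \<Rightarrow> nat) \<Rightarrow> real" where
  "mi_fact \<alpha> = (\<Prod>b\<in>Basis. fact (\<alpha> b))"

text \<open>partial^alpha v, taking the derivatives in some order (irrelevant for C^q functions).\<close>
definition pdm :: "('a::euclidean_space \<Rightarrow> nat) \<Rightarrow> ('a \<Rightarrow> real) \<Rightarrow> 'a \<Rightarrow> real" where
  "pdm \<alpha> v = pds (SOME bs. set bs \<subseteq> Basis \<and> (\<forall>b. count_list bs b = \<alpha> b)) v"

text \<open>The C^q norm: sum over |alpha|<=q of (1/alpha!) max over the closure of |partial^alpha v|
  (the max of the continuous extension over the closure equals the sup over Omega).\<close>
definition Cq_norm :: "'a::euclidean_space set \<Rightarrow> nat \<Rightarrow> ('a \<Rightarrow> real) \<Rightarrow> real" where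
  "Cq_norm \<Omega> q v = (\<Sum>\<alpha>\<in>multi_idx q. (1 / mi_fact \<alpha>) * (SUP x\<in>\<Omega>. \<bar>pdm \<alpha> v x\<bar>))"

definition sup_norm :: "'a::euclidean_space set \<Rightarrow> ('a \<Rightarrow> real) \<Rightarrow> real" where
  "sup_norm \<Omega> v = (SUP x\<in>closure \<Omega>. \<bar>v x\<bar>)"

definition Kop :: "'a::euclidean_space set \<Rightarrow> ('a \<times> 'a \<Rightarrow> real) \<Rightarrow> ('a \<Rightarrow> real) \<Rightarrow> 'a \<Rightarrow> real" where
  "Kop \<Omega> k v x = integral \<Omega> (\<lambda>y. k (x, y) * v y)"

definition not_in_spectrum :: "'a::euclidean_space set \<Rightarrow> ('a \<times> 'a \<Rightarrow> real) \<Rightarrow> real \<Rightarrow> bool" where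
  "not_in_spectrum \<Omega> k lam \<longleftrightarrow>
     (\<forall>g. continuous_on (closure \<Omega>) g \<longrightarrow>
        (\<exists>v. continuous_on (closure \<Omega>) v \<and> (\<forall>x\<in>closure \<Omega>. lam * v x - Kop \<Omega> k v x = g x))) \<and>
     (\<forall>v. continuous_on (closure \<Omega>) v \<and> (\<forall>x\<in>closure \<Omega>. lam * v x - Kop \<Omega> k v x = 0)
        \<longrightarrow> (\<forall>x\<in>closure \<Omega>. v x = 0)) \<and>
     (\<exists>C. \<forall>v. continuous_on (closure \<Omega>) v \<longrightarrow>
        sup_norm \<Omega> v \<le> C * sup_norm \<Omega> (\<lambda>x. lam * v x - Kop \<Omega> k v x))"

definition quad_scheme :: "'a::euclidean_space set \<Rightarrow> (real \<Rightarrow> nat) \<Rightarrow> (real \<Rightarrow> nat \<Rightarrow> 'a) \<Rightarrow> bool" where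
  "quad_scheme \<Omega> N y \<longleftrightarrow>
     (\<forall>h>0. (\<forall>i<N h. y h i \<in> closure \<Omega>) \<and> inj_on (y h) {..<N h}) \<and>
     filterlim N at_top (at_right 0)"

definition quad_order :: "'a::euclidean_space set \<Rightarrow> nat \<Rightarrow> (real \<Rightarrow> nat) \<Rightarrow> (real \<Rightarrow> nat \<Rightarrow> 'a)
    \<Rightarrow> (real \<Rightarrow> nat \<Rightarrow> real) \<Rightarrow> bool" where
  "quad_order \<Omega> q N y w \<longleftrightarrow> (\<exists>Cw. \<forall>h>0. \<forall>v. Cq \<Omega> q v \<longrightarrow>
     \<bar>integral \<Omega> v - (\<Sum>i<N h. w h i * v (y h i))\<bar> \<le> Cw * h ^ q * Cq_norm \<Omega> q v)"

definition quad_stable :: "(real \<Rightarrow> nat) \<Rightarrow> (real \<Rightarrow> nat \<Rightarrow> real) \<Rightarrow> bool" where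
  "quad_stable N w \<longleftrightarrow> (\<exists>CQ. \<forall>h>0. (\<Sum>i<N h. \<bar>w h i\<bar>) \<le> CQ)"

section \<open>n x n matrices as functions on {..<n} x {..<n}\<close>

definition mat_mult :: "nat \<Rightarrow> (nat \<Rightarrow> nat \<Rightarrow> real) \<Rightarrow> (nat \<Rightarrow> nat \<Rightarrow> real) \<Rightarrow> nat \<Rightarrow> nat \<Rightarrow> real" where
  "mat_mult n A B i j = (\<Sum>l<n. A i l * B l j)"

definition is_inverse :: "nat \<Rightarrow> (nat \<Rightarrow> nat \<Rightarrow> real) \<Rightarrow> (nat \<Rightarrow> nat \<Rightarrow> real) \<Rightarrow> bool" where
  "is_inverse n A B \<longleftrightarrow> (\<forall>i<n. \<forall>j<n.
     mat_mult n A B i j = (if i = j then 1 else 0) \<and> mat_mult n B A i j = (if i = j then 1 else 0))"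

text \<open>Matrix norm induced by the max-norm (maximal absolute row sum).\<close>
definition norm_inf :: "nat \<Rightarrow> (nat \<Rightarrow> nat \<Rightarrow> real) \<Rightarrow> real" where
  "norm_inf n A = Max ((\<lambda>i. \<Sum>j<n. \<bar>A i j\<bar>) ` {..<n})"

definition cond_inf :: "nat \<Rightarrow> (nat \<Rightarrow> nat \<Rightarrow> real) \<Rightarrow> real" where
  "cond_inf n A = norm_inf n A * norm_inf n (SOME B. is_inverse n A B)"

definition nys_mat :: "real \<Rightarrow> ('a \<times> 'a \<Rightarrow> real) \<Rightarrow> (nat \<Rightarrow> 'a) \<Rightarrow> (nat \<Rightarrow> real) \<Rightarrow> nat \<Rightarrow> nat \<Rightarrow> real" where
  "nys_mat lam k y w i j = (if i = j then lam else 0) - k (y i, y j) * w j"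

end

theory Submission
  imports Defs "Jordan_Normal_Form.Determinant"
begin

text \<open>The Nystrom system is lam I - K_h applied to nodal values, where K_h is the integral operator
  with the integral replaced by the quadrature rule. If v solves it with data g, the Nystrom
  interpolant phi = K_h v satisfies lam phi - K phi = K_h g - E v, where E collects the quadrature
  errors of the iterated kernel z |-> k(x, z) k(z, y); by Leibniz's rule these products are C^q
  uniformly in x, y, so E = O(h^q). The resolvent bound for lam - K then gives
  max |v| <= D max |g| as soon as E is small compared with lam. This bounds the inverse of the
  system matrix, hence its condition number, and gives unique solvability. The exact solution
  solves the discrete system at the nodes up to the quadrature error of z |-> k(x, z) u(z), which
  is O(h^q ||u||_C^q) because the C^q norm bounds every partial derivative (by the symmetry of
  second derivatives); stability turns this into the nodal error, and the interpolation formula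
  carries it to all of the closure.\<close>

section \<open>Partial derivatives\<close>

lemma has_pd_pd:
  "has_pd b f x \<Longrightarrow> ((\<lambda>t. f (x + t *\<^sub>R b)) has_real_derivative pd b f x) (at 0)"
  unfolding has_pd_def pd_def by (metis DERIV_imp_deriv)

lemma has_pdI: "((\<lambda>t. f (x + t *\<^sub>R b)) has_real_derivative D) (at 0) \<Longrightarrow> has_pd b f x"
  unfolding has_pd_def by blast

lemma pd_eqI: "((\<lambda>t. f (x + t *\<^sub>R b)) has_real_derivative D) (at 0) \<Longrightarrow> pd b f x = D"
  unfolding pd_def by (rule DERIV_imp_deriv)

lemma has_pd_pd_at:
  fixes f :: "'a::euclidean_space \<Rightarrow> real"
  assumes "has_pd b f (x + s *\<^sub>R b)"
  shows "((\<lambda>s. f (x + s *\<^sub>R b)) has_real_derivative pd b f (x + s *\<^sub>R b)) (at s)"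
proof -
  have "((\<lambda>t. f ((x + s *\<^sub>R b) + t *\<^sub>R b)) has_real_derivative pd b f (x + s *\<^sub>R b)) (at (s + - s))"
    using has_pd_pd[OF assms] by simp
  moreover have "(\<lambda>t. f ((x + s *\<^sub>R b) + (t + - s) *\<^sub>R b)) = (\<lambda>t. f (x + t *\<^sub>R b))"
    by (simp add: algebra_simps)
  ultimately show ?thesis unfolding DERIV_shift by simp
qed

lemma eventually_line_in_open:
  fixes x b :: "'a::real_normed_vector"
  assumes "open S" "x \<in> S"
  shows "\<forall>\<^sub>F t in nhds 0. x + t *\<^sub>R b \<in> S"
proof -
  have "((\<lambda>t::real. x + t *\<^sub>R b) \<longlongrightarrow> x + 0 *\<^sub>R b) (nhds 0)"
    by (intro tendsto_intros) (simp add: filterlim_ident)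
  then have "((\<lambda>t::real. x + t *\<^sub>R b) \<longlongrightarrow> x) (nhds 0)" by simp
  then show ?thesis using assms by (metis topological_tendstoD)
qed

lemma pd_cong:
  fixes f g :: "'a::euclidean_space \<Rightarrow> real"
  assumes "open S" "x \<in> S" "\<And>z. z \<in> S \<Longrightarrow> f z = g z"
  shows "has_pd b f x = has_pd b g x" "pd b f x = pd b g x"
proof -
  have ev: "\<forall>\<^sub>F t in nhds 0. f (x + t *\<^sub>R b) = g (x + t *\<^sub>R b)"
    using eventually_line_in_open[OF assms(1,2), of b] by eventually_elim (use assms(3) in auto)
  show "has_pd b f x = has_pd b g x"
    unfolding has_pd_def using DERIV_cong_ev[OF refl ev refl] by simp
  show "pd b f x = pd b g x" unfolding pd_def by (rule deriv_cong_ev[OF ev refl])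
qed

text \<open>The summands of the Leibniz rule for the derivatives bs of a product: each derivative
  in bs falls either on the first or on the second factor, keeping the order of bs.\<close>
fun splits :: "'b list \<Rightarrow> ('b list \<times> 'b list) list" where
  "splits [] = [([], [])]"
| "splits (b # bs) = concat (map (\<lambda>(l, r). [(b # l, r), (l, b # r)]) (splits bs))"

lemma mset_splits: "(l, r) \<in> set (splits bs) \<Longrightarrow> mset l + mset r = mset bs"
  by (induction bs arbitrary: l r) auto

lemma length_splits: "length (splits bs) = 2 ^ length bs"
proof (induction bs)
  case (Cons b bs)
  have "length (concat (map (\<lambda>(l, r). [(b # l, r), (l, b # r)]) xs)) = 2 * length xs" for xs
    by (induction xs) auto
  then show ?case using Cons by simp
qed simp

lemma sum_list_splits_Cons:
  "(\<Sum>(l, r)\<leftarrow>splits (b # bs). pds l f x * pds r g x)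
   = (\<Sum>(l, r)\<leftarrow>splits bs. pd b (pds l f) x * pds r g x + pds l f x * pd b (pds r g) x)"
proof -
  have "(\<Sum>(l, r)\<leftarrow>concat (map (\<lambda>(l, r). [(b # l, r), (l, b # r)]) xs). pds l f x * pds r g x)
    = (\<Sum>(l, r)\<leftarrow>xs. pd b (pds l f) x * pds r g x + pds l f x * pd b (pds r g) x)" for xs
    by (induction xs) auto
  then show ?thesis by simp
qed

lemma has_pd_sum_list_mult:
  fixes F G :: "'b \<Rightarrow> 'a::euclidean_space \<Rightarrow> real"
  assumes "\<And>l r. (l, r) \<in> set xs \<Longrightarrow> has_pd b (F l) x \<and> has_pd b (G r) x"
  shows "((\<lambda>t. \<Sum>(l, r)\<leftarrow>xs. F l (x + t *\<^sub>R b) * G r (x + t *\<^sub>R b)) has_real_derivative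
      (\<Sum>(l, r)\<leftarrow>xs. pd b (F l) x * G r x + F l x * pd b (G r) x)) (at 0)"
  using assms
proof (induction xs)
  case (Cons lr xs)
  obtain l r where lr: "lr = (l, r)" by force
  then have "has_pd b (F l) x" "has_pd b (G r) x" using Cons.prems by auto
  from DERIV_mult[OF has_pd_pd[OF this(1)] has_pd_pd[OF this(2)]]
  have hd: "((\<lambda>t. F l (x + t *\<^sub>R b) * G r (x + t *\<^sub>R b)) has_real_derivative
      pd b (F l) x * G r x + F l x * pd b (G r) x) (at 0)"
    by (simp add: mult.commute)
  have tl: "((\<lambda>t. \<Sum>(l, r)\<leftarrow>xs. F l (x + t *\<^sub>R b) * G r (x + t *\<^sub>R b)) has_real_derivative
      (\<Sum>(l, r)\<leftarrow>xs. pd b (F l) x * G r x + F l x * pd b (G r) x)) (at 0)"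
    by (rule Cons.IH) (use Cons.prems in auto)
  from DERIV_add[OF hd tl] show ?case by (simp add: lr)
qed simp

lemma pds_mult:
  fixes f g :: "'a::euclidean_space \<Rightarrow> real"
  assumes S: "open S" and ex: "\<And>l. mset l \<subseteq># mset bs \<Longrightarrow> pds_exist S l f \<and> pds_exist S l g"
  shows "pds_exist S bs (\<lambda>x. f x * g x) \<and>
    (\<forall>x\<in>S. pds bs (\<lambda>x. f x * g x) x = (\<Sum>(l, r)\<leftarrow>splits bs. pds l f x * pds r g x))"
  using ex
proof (induction bs)
  case (Cons b bs)
  have "pds_exist S bs (\<lambda>x. f x * g x) \<and>
    (\<forall>x\<in>S. pds bs (\<lambda>x. f x * g x) x = (\<Sum>(l, r)\<leftarrow>splits bs. pds l f x * pds r g x))"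
  proof (rule Cons.IH)
    fix l :: "'a list" assume "mset l \<subseteq># mset bs"
    moreover have "mset bs \<subseteq># mset (b # bs)" by simp
    ultimately show "pds_exist S l f \<and> pds_exist S l g"
      using Cons.prems subset_mset.order_trans by blast
  qed
  then have IH: "pds_exist S bs (\<lambda>x. f x * g x)"
    "\<And>x. x \<in> S \<Longrightarrow> pds bs (\<lambda>x. f x * g x) x = (\<Sum>(l, r)\<leftarrow>splits bs. pds l f x * pds r g x)"
    by auto
  define P where "P = (\<lambda>x. \<Sum>(l, r)\<leftarrow>splits bs. pds l f x * pds r g x)"
  have step: "has_pd b (pds bs (\<lambda>x. f x * g x)) x \<and>
      pd b (pds bs (\<lambda>x. f x * g x)) x = (\<Sum>(l, r)\<leftarrow>splits (b # bs). pds l f x * pds r g x)"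
    if x: "x \<in> S" for x
  proof -
    have "has_pd b (pds l f) x \<and> has_pd b (pds r g) x" if "(l, r) \<in> set (splits bs)" for l r
    proof -
      have "mset (b # l) \<subseteq># mset (b # bs)" "mset (b # r) \<subseteq># mset (b # bs)"
        using mset_splits[OF that] by (auto simp flip: mset_splits[OF that])
      then have "pds_exist S (b # l) f" "pds_exist S (b # r) g" using Cons.prems by blast+
      then show ?thesis using x by simp
    qed
    from has_pd_sum_list_mult[of "splits bs" b "\<lambda>l. pds l f" x "\<lambda>r. pds r g", OF this]
    have "((\<lambda>t. P (x + t *\<^sub>R b)) has_real_derivative
        (\<Sum>(l, r)\<leftarrow>splits (b # bs). pds l f x * pds r g x)) (at 0)"
      unfolding sum_list_splits_Cons P_def .
    note has_pdI[OF this] pd_eqI[OF this]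
    moreover have "has_pd b (pds bs (\<lambda>x. f x * g x)) x = has_pd b P x"
      "pd b (pds bs (\<lambda>x. f x * g x)) x = pd b P x"
      using pd_cong[OF S x, of "pds bs (\<lambda>x. f x * g x)" P b] IH(2) unfolding P_def by auto
    ultimately show ?thesis by simp
  qed
  show ?case using IH step by simp
qed simp

lemma mixed_difference_mvt:
  fixes F :: "'a::euclidean_space \<Rightarrow> real"
  assumes s: "s > 0"
    and box: "\<And>\<sigma> \<tau>. 0 \<le> \<sigma> \<Longrightarrow> \<sigma> \<le> s \<Longrightarrow> 0 \<le> \<tau> \<Longrightarrow> \<tau> \<le> s \<Longrightarrow> x + \<sigma> *\<^sub>R b + \<tau> *\<^sub>R c \<in> S"
    and pd_b: "\<forall>z\<in>S. has_pd b F z" and pd_cb: "\<forall>z\<in>S. has_pd c (pd b F) z"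
  obtains \<xi> \<eta> where "0 \<le> \<xi>" "\<xi> \<le> s" "0 \<le> \<eta>" "\<eta> \<le> s"
    "F (x + s *\<^sub>R b + s *\<^sub>R c) - F (x + s *\<^sub>R b) - F (x + s *\<^sub>R c) + F x
       = s * s * pd c (pd b F) (x + \<xi> *\<^sub>R b + \<eta> *\<^sub>R c)"
proof -
  define \<phi> where "\<phi> = (\<lambda>\<sigma>. F ((x + s *\<^sub>R c) + \<sigma> *\<^sub>R b) - F (x + \<sigma> *\<^sub>R b))"
  have "(\<phi> has_real_derivative (pd b F ((x + s *\<^sub>R c) + \<sigma> *\<^sub>R b) - pd b F (x + \<sigma> *\<^sub>R b))) (at \<sigma>)"
    if "0 \<le> \<sigma>" "\<sigma> \<le> s" for \<sigma>
  proof -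
    have "(x + s *\<^sub>R c) + \<sigma> *\<^sub>R b \<in> S" "x + \<sigma> *\<^sub>R b \<in> S"
      using box[of \<sigma> s] box[of \<sigma> 0] that s by (simp_all add: algebra_simps)
    then show ?thesis unfolding \<phi>_def by (intro DERIV_diff has_pd_pd_at) (use pd_b in auto)
  qed
  from MVT2[of 0 s \<phi>, OF s this] obtain \<xi> where \<xi>: "0 < \<xi>" "\<xi> < s" and
    mvt1: "\<phi> s - \<phi> 0 = s * (pd b F ((x + s *\<^sub>R c) + \<xi> *\<^sub>R b) - pd b F (x + \<xi> *\<^sub>R b))"
    by auto
  define \<psi> where "\<psi> = (\<lambda>\<tau>. pd b F ((x + \<xi> *\<^sub>R b) + \<tau> *\<^sub>R c))"
  have "(\<psi> has_real_derivative pd c (pd b F) ((x + \<xi> *\<^sub>R b) + \<tau> *\<^sub>R c)) (at \<tau>)"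
    if "0 \<le> \<tau>" "\<tau> \<le> s" for \<tau>
    unfolding \<psi>_def by (rule has_pd_pd_at) (use box[of \<xi> \<tau>] that \<xi> pd_cb in auto)
  from MVT2[of 0 s \<psi>, OF s this] obtain \<eta> where \<eta>: "0 < \<eta>" "\<eta> < s" and
    mvt2: "\<psi> s - \<psi> 0 = s * pd c (pd b F) ((x + \<xi> *\<^sub>R b) + \<eta> *\<^sub>R c)"
    by auto
  have "F (x + s *\<^sub>R b + s *\<^sub>R c) - F (x + s *\<^sub>R b) - F (x + s *\<^sub>R c) + F x = \<phi> s - \<phi> 0"
    unfolding \<phi>_def by (simp add: algebra_simps)
  also have "\<dots> = s * (\<psi> s - \<psi> 0)" using mvt1 unfolding \<psi>_def by (simp add: algebra_simps)
  also have "\<dots> = s * s * pd c (pd b F) (x + \<xi> *\<^sub>R b + \<eta> *\<^sub>R c)" using mvt2 by simp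
  finally show ?thesis using \<xi> \<eta> by (intro that[of \<xi> \<eta>]) auto
qed

lemma small_square_in_ball:
  fixes x b c :: "'a::real_normed_vector"
  assumes "d > 0"
  obtains s where "s > 0"
    "\<And>\<sigma> \<tau>. 0 \<le> \<sigma> \<Longrightarrow> \<sigma> \<le> s \<Longrightarrow> 0 \<le> \<tau> \<Longrightarrow> \<tau> \<le> s \<Longrightarrow> x + \<sigma> *\<^sub>R b + \<tau> *\<^sub>R c \<in> ball x d"
proof
  define s where "s = d / (2 * (norm b + norm c + 1))"
  have pos: "0 < norm b + norm c + 1" by (intro add_nonneg_pos add_nonneg_nonneg) simp_all
  then show s: "s > 0" unfolding s_def using assms by simp
  fix \<sigma> \<tau> :: real assume "0 \<le> \<sigma>" "\<sigma> \<le> s" "0 \<le> \<tau>" "\<tau> \<le> s"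
  then have "norm (\<sigma> *\<^sub>R b + \<tau> *\<^sub>R c) \<le> s * norm b + s * norm c"
    by (intro order_trans[OF norm_triangle_ineq] add_mono) (simp_all add: mult_right_mono)
  also have "\<dots> < s * (2 * (norm b + norm c + 1))"
  proof -
    have "0 \<le> s * norm b" "0 \<le> s * norm c" using s by simp_all
    moreover have "s * (2 * (norm b + norm c + 1)) = 2 * (s * norm b) + 2 * (s * norm c) + 2 * s"
      by (simp add: algebra_simps)
    ultimately show ?thesis using s by linarith
  qed
  also have "\<dots> = d" unfolding s_def using pos by simp
  finally have "dist (x + \<sigma> *\<^sub>R b + \<tau> *\<^sub>R c) x < d" by (simp add: dist_norm)
  then show "x + \<sigma> *\<^sub>R b + \<tau> *\<^sub>R c \<in> ball x d" by (simp add: dist_commute)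
qed

lemma pd_commute:
  fixes F :: "'a::euclidean_space \<Rightarrow> real"
  assumes S: "open S" and x: "x \<in> S"
    and pd_b: "\<forall>z\<in>S. has_pd b F z" and pd_c: "\<forall>z\<in>S. has_pd c F z"
    and pd_cb: "\<forall>z\<in>S. has_pd c (pd b F) z" and pd_bc: "\<forall>z\<in>S. has_pd b (pd c F) z"
    and cont_cb: "continuous_on S (pd c (pd b F))" and cont_bc: "continuous_on S (pd b (pd c F))"
  shows "pd c (pd b F) x = pd b (pd c F) x"
proof (rule ccontr)
  let ?A = "pd c (pd b F) x" and ?B = "pd b (pd c F) x"
  assume "?A \<noteq> ?B"
  define e where "e = \<bar>?A - ?B\<bar> / 2"
  have e: "e > 0" using \<open>?A \<noteq> ?B\<close> unfolding e_def by simp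
  obtain d where d: "d > 0" "ball x d \<subseteq> S"
    "\<And>z. z \<in> ball x d \<Longrightarrow> \<bar>pd c (pd b F) z - ?A\<bar> < e \<and> \<bar>pd b (pd c F) z - ?B\<bar> < e"
  proof -
    obtain r where "r > 0" "ball x r \<subseteq> S" using S x open_contains_ball by blast
    moreover obtain d1 where "d1 > 0" "\<And>z. z \<in> S \<Longrightarrow> dist z x < d1 \<Longrightarrow> dist (pd c (pd b F) z) ?A < e"
      using cont_cb x e unfolding continuous_on_iff by metis
    moreover obtain d2 where "d2 > 0" "\<And>z. z \<in> S \<Longrightarrow> dist z x < d2 \<Longrightarrow> dist (pd b (pd c F) z) ?B < e"
      using cont_bc x e unfolding continuous_on_iff by metis
    ultimately show ?thesis
      by (intro that[of "min r (min d1 d2)"]) (auto simp: dist_real_def dist_commute subset_iff)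
  qed
  obtain s where s: "s > 0"
    and sq: "\<And>\<sigma> \<tau>. 0 \<le> \<sigma> \<Longrightarrow> \<sigma> \<le> s \<Longrightarrow> 0 \<le> \<tau> \<Longrightarrow> \<tau> \<le> s \<Longrightarrow> x + \<sigma> *\<^sub>R b + \<tau> *\<^sub>R c \<in> ball x d"
    using small_square_in_ball[OF d(1)] by blast
  have sq': "x + \<sigma> *\<^sub>R c + \<tau> *\<^sub>R b \<in> ball x d" if "0 \<le> \<sigma>" "\<sigma> \<le> s" "0 \<le> \<tau>" "\<tau> \<le> s" for \<sigma> \<tau>
    using sq[OF that(3,4,1,2)] by (simp add: algebra_simps)
  obtain \<xi> \<eta> where "0 \<le> \<xi>" "\<xi> \<le> s" "0 \<le> \<eta>" "\<eta> \<le> s" and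
    mvt_bc: "F (x + s *\<^sub>R b + s *\<^sub>R c) - F (x + s *\<^sub>R b) - F (x + s *\<^sub>R c) + F x
       = s * s * pd c (pd b F) (x + \<xi> *\<^sub>R b + \<eta> *\<^sub>R c)"
    using mixed_difference_mvt[OF s subsetD[OF d(2) sq] pd_b pd_cb] .
  then have A: "\<bar>pd c (pd b F) (x + \<xi> *\<^sub>R b + \<eta> *\<^sub>R c) - ?A\<bar> < e"
    using d(3)[OF sq] by simp
  obtain \<xi>' \<eta>' where "0 \<le> \<xi>'" "\<xi>' \<le> s" "0 \<le> \<eta>'" "\<eta>' \<le> s" and
    mvt_cb: "F (x + s *\<^sub>R c + s *\<^sub>R b) - F (x + s *\<^sub>R c) - F (x + s *\<^sub>R b) + F x
       = s * s * pd b (pd c F) (x + \<xi>' *\<^sub>R c + \<eta>' *\<^sub>R b)"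
    using mixed_difference_mvt[OF s subsetD[OF d(2) sq'] pd_c pd_bc] .
  then have B: "\<bar>pd b (pd c F) (x + \<xi>' *\<^sub>R c + \<eta>' *\<^sub>R b) - ?B\<bar> < e"
    using d(3)[OF sq'] by simp
  have "pd c (pd b F) (x + \<xi> *\<^sub>R b + \<eta> *\<^sub>R c) = pd b (pd c F) (x + \<xi>' *\<^sub>R c + \<eta>' *\<^sub>R b)"
    using mvt_bc mvt_cb s by (simp add: algebra_simps)
  with A B have "\<bar>?A - ?B\<bar> < 2 * e" by linarith
  then show False unfolding e_def by simp
qed

section \<open>The spaces C^q\<close>

lemma Cq_alt:
  "Cq \<Omega> q v \<longleftrightarrow> continuous_on (closure \<Omega>) v \<and>
     (\<forall>bs. set bs \<subseteq> Basis \<and> length bs \<le> q \<longrightarrow>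
        pds_exist \<Omega> bs v \<and> (\<exists>g. continuous_on (closure \<Omega>) g \<and> (\<forall>x\<in>\<Omega>. g x = pds bs v x)))"
  unfolding Cq_def
proof safe
  fix bs :: "'a list"
  assume "continuous_on (closure \<Omega>) v" "set bs \<subseteq> Basis" "length bs \<le> q" and
    "\<forall>bs. set bs \<subseteq> Basis \<and> bs \<noteq> [] \<and> length bs \<le> q \<longrightarrow>
       pds_exist \<Omega> bs v \<and> (\<exists>g. continuous_on (closure \<Omega>) g \<and> (\<forall>x\<in>\<Omega>. g x = pds bs v x))"
  then show "pds_exist \<Omega> bs v" "\<exists>g. continuous_on (closure \<Omega>) g \<and> (\<forall>x\<in>\<Omega>. g x = pds bs v x)"
    by (cases "bs = []"; auto)+
qed auto

lemma Cq_pds_exist: "Cq \<Omega> q v \<Longrightarrow> set bs \<subseteq> Basis \<Longrightarrow> length bs \<le> q \<Longrightarrow> pds_exist \<Omega> bs v"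
  unfolding Cq_alt by blast

lemma Cq_pds_extension:
  "Cq \<Omega> q v \<Longrightarrow> set bs \<subseteq> Basis \<Longrightarrow> length bs \<le> q \<Longrightarrow>
    \<exists>g. continuous_on (closure \<Omega>) g \<and> (\<forall>x\<in>\<Omega>. g x = pds bs v x)"
  unfolding Cq_alt by blast

lemma Cq_continuous_on_pds:
  assumes "Cq \<Omega> q v" "set bs \<subseteq> Basis" "length bs \<le> q"
  shows "continuous_on \<Omega> (pds bs v)"
proof -
  obtain g where "continuous_on (closure \<Omega>) g" "\<forall>x\<in>\<Omega>. g x = pds bs v x"
    using Cq_pds_extension[OF assms] by blast
  then show ?thesis by (metis closure_subset continuous_on_eq continuous_on_subset)
qed

lemma Cq_pds_swap:
  assumes "open \<Omega>" "Cq \<Omega> q u" "set (c # b # bs) \<subseteq> Basis" "length (c # b # bs) \<le> q" "x \<in> \<Omega>"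
  shows "pds (c # b # bs) u x = pds (b # c # bs) u x"
proof -
  have "set (b # c # bs) \<subseteq> Basis" "length (b # c # bs) \<le> q" using assms(3,4) by auto
  note Cq_pds_exist[OF assms(2) assms(3,4)] Cq_pds_exist[OF assms(2) this]
    Cq_continuous_on_pds[OF assms(2) assms(3,4)] Cq_continuous_on_pds[OF assms(2) this]
  then show ?thesis using pd_commute[OF assms(1,5), of b "pds bs u" c] by simp
qed

lemma Cq_pds_move_to_front:
  assumes "open \<Omega>" "Cq \<Omega> q u"
  shows "set (cs @ b # bs) \<subseteq> Basis \<Longrightarrow> length (cs @ b # bs) \<le> q \<Longrightarrow> x \<in> \<Omega> \<Longrightarrow>
    pds (cs @ b # bs) u x = pds (b # cs @ bs) u x"
proof (induction cs arbitrary: x)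
  case (Cons c cs)
  have "pds (c # cs @ b # bs) u x = pd c (pds (cs @ b # bs) u) x" by simp
  also have "\<dots> = pd c (pds (b # cs @ bs) u) x"
    by (rule pd_cong(2)[OF assms(1) Cons.prems(3)]) (use Cons.IH Cons.prems(1,2) in auto)
  also have "\<dots> = pds (c # b # cs @ bs) u x" by simp
  also have "\<dots> = pds (b # c # cs @ bs) u x"
    by (rule Cq_pds_swap[OF assms]) (use Cons.prems in auto)
  finally show ?case by simp
qed simp

lemma Cq_pds_mset_eq:
  assumes "open \<Omega>" "Cq \<Omega> q u"
  shows "mset cs = mset bs \<Longrightarrow> set bs \<subseteq> Basis \<Longrightarrow> length bs \<le> q \<Longrightarrow> x \<in> \<Omega> \<Longrightarrow>
    pds cs u x = pds bs u x"
proof (induction bs arbitrary: cs x)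
  case (Cons b bs)
  have "b \<in> set cs" using mset_eq_setD[OF Cons.prems(1)] by simp
  then obtain cs1 cs2 where cs: "cs = cs1 @ b # cs2" by (meson split_list)
  have ms: "mset (cs1 @ cs2) = mset bs" using Cons.prems(1) cs by simp
  have adm: "set (cs1 @ b # cs2) \<subseteq> Basis" "length (cs1 @ b # cs2) \<le> q"
    using mset_eq_setD[OF Cons.prems(1)] mset_eq_length[OF Cons.prems(1)] Cons.prems(2,3)
    unfolding cs by auto
  have "pds cs u x = pds (b # cs1 @ cs2) u x"
    unfolding cs by (rule Cq_pds_move_to_front[OF assms adm Cons.prems(4)])
  also have "\<dots> = pd b (pds bs u) x"
    using pd_cong(2)[OF assms(1) Cons.prems(4), of "pds (cs1 @ cs2) u" "pds bs u" b]
      Cons.IH[OF ms] Cons.prems(2,3) by simp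
  finally show ?case by simp
qed simp

definition pds_bounded :: "'a::euclidean_space set \<Rightarrow> nat \<Rightarrow> ('a \<Rightarrow> real) \<Rightarrow> real \<Rightarrow> bool" where
  "pds_bounded S q v M \<longleftrightarrow> (\<forall>bs. set bs \<subseteq> Basis \<and> length bs \<le> q \<longrightarrow> (\<forall>x\<in>S. \<bar>pds bs v x\<bar> \<le> M))"

lemma pds_boundedD:
  "pds_bounded S q v M \<Longrightarrow> set bs \<subseteq> Basis \<Longrightarrow> length bs \<le> q \<Longrightarrow> x \<in> S \<Longrightarrow> \<bar>pds bs v x\<bar> \<le> M"
  unfolding pds_bounded_def by blast

lemma Cq_pds_bounded:
  assumes "bounded \<Omega>" "Cq \<Omega> q v"
  obtains M where "pds_bounded \<Omega> q v M"
proof -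
  let ?L = "{bs :: 'a list. set bs \<subseteq> Basis \<and> length bs \<le> q}"
  have "bounded (pds bs v ` \<Omega>)" if bs: "bs \<in> ?L" for bs
  proof -
    obtain g where g: "continuous_on (closure \<Omega>) g" "\<forall>x\<in>\<Omega>. g x = pds bs v x"
      using Cq_pds_extension[OF assms(2)] bs by blast
    have "bounded (g ` closure \<Omega>)"
      using assms(1) g(1) by (intro compact_imp_bounded compact_continuous_image) auto
    moreover have "pds bs v ` \<Omega> \<subseteq> g ` closure \<Omega>"
      using g(2) closure_subset by (metis image_cong image_mono)
    ultimately show ?thesis by (rule bounded_subset)
  qed
  moreover have "finite ?L" by (rule finite_lists_length_le) simp
  ultimately have "bounded (\<Union>bs\<in>?L. pds bs v ` \<Omega>)" by (simp add: bounded_UN)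
  then obtain M where "\<forall>y\<in>(\<Union>bs\<in>?L. pds bs v ` \<Omega>). norm y \<le> M" by (auto simp: bounded_iff)
  then show ?thesis by (intro that) (auto simp: pds_bounded_def)
qed

lemma exists_list_count_list:
  assumes "finite B"
  shows "(\<And>b. b \<notin> B \<Longrightarrow> \<alpha> b = 0) \<Longrightarrow> \<exists>bs. set bs \<subseteq> B \<and> (\<forall>b. count_list bs b = \<alpha> b)"
  using assms
proof (induction B arbitrary: \<alpha> rule: finite_induct)
  case empty
  then show ?case by (intro exI[of _ "[]"]) auto
next
  case (insert c B)
  have "\<And>b. b \<notin> B \<Longrightarrow> (\<alpha>(c := 0)) b = 0" using insert.prems by auto
  then obtain bs where bs: "set bs \<subseteq> B" "\<forall>b. count_list bs b = (\<alpha>(c := 0)) b"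
    using insert.IH by blast
  have "count_list (replicate n c) b = (if c = b then n else 0)" for n b
    by (induction n) auto
  then show ?case using bs by (intro exI[of _ "replicate (\<alpha> c) c @ bs"]) auto
qed

lemma pdm_eq_pds:
  assumes "\<alpha> \<in> multi_idx q"
  shows "\<exists>bs :: 'a::euclidean_space list. set bs \<subseteq> Basis \<and> length bs \<le> q \<and>
    (\<forall>b. count_list bs b = \<alpha> b) \<and> pdm \<alpha> = pds bs"
proof -
  let ?P = "\<lambda>bs. set bs \<subseteq> (Basis :: 'a set) \<and> (\<forall>b. count_list bs b = \<alpha> b)"
  have "\<exists>bs. ?P bs"
    using exists_list_count_list[of "Basis :: 'a set" \<alpha>] assms unfolding multi_idx_def by auto
  then have P: "?P (SOME bs. ?P bs)" by (rule someI_ex)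
  have "length (SOME bs. ?P bs) = (\<Sum>b\<in>Basis. count_list (SOME bs. ?P bs) b)"
    using P sum_count_set[of "SOME bs. ?P bs" Basis] by simp
  also have "\<dots> \<le> q" using P assms unfolding multi_idx_def by simp
  finally show ?thesis using P by (auto simp: pdm_def fun_eq_iff)
qed

lemma mi_fact_ge_1: "1 \<le> mi_fact \<alpha>"
  unfolding mi_fact_def by (intro prod_ge_1) simp

lemma finite_multi_idx: "finite (multi_idx q :: ('a::euclidean_space \<Rightarrow> nat) set)"
proof -
  let ?ext = "\<lambda>f (b::'a). if b \<in> Basis then f b else 0"
  have "multi_idx q \<subseteq> ?ext ` (PiE Basis (\<lambda>_. {..q}))"
  proof
    fix \<alpha> :: "'a \<Rightarrow> nat" assume \<alpha>: "\<alpha> \<in> multi_idx q"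
    have "\<alpha> b \<le> q" if "b \<in> Basis" for b
      using member_le_sum[of b Basis \<alpha>] that \<alpha> unfolding multi_idx_def by auto
    then have "restrict \<alpha> Basis \<in> PiE Basis (\<lambda>_. {..q})" by auto
    moreover have "\<alpha> = ?ext (restrict \<alpha> Basis)" using \<alpha> unfolding multi_idx_def by (auto simp: fun_eq_iff)
    ultimately show "\<alpha> \<in> ?ext ` (PiE Basis (\<lambda>_. {..q}))" by blast
  qed
  then show ?thesis by (rule finite_subset) (intro finite_imageI finite_PiE; simp)
qed

lemma pdm_SUP_bounds:
  assumes "\<Omega> \<noteq> {}" "\<alpha> \<in> multi_idx q" "pds_bounded \<Omega> q v B"
  shows "\<And>x. x \<in> \<Omega> \<Longrightarrow> \<bar>pdm \<alpha> v x\<bar> \<le> (SUP x\<in>\<Omega>. \<bar>pdm \<alpha> v x\<bar>)"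
    and "0 \<le> (SUP x\<in>\<Omega>. \<bar>pdm \<alpha> v x\<bar>)" and "(SUP x\<in>\<Omega>. \<bar>pdm \<alpha> v x\<bar>) \<le> B"
proof -
  obtain bs where "set bs \<subseteq> Basis" "length bs \<le> q" "pdm \<alpha> = pds bs"
    using pdm_eq_pds[OF assms(2)] by blast
  then have le_B: "\<forall>x\<in>\<Omega>. \<bar>pdm \<alpha> v x\<bar> \<le> B" using pds_boundedD[OF assms(3)] by simp
  then have "bdd_above ((\<lambda>x. \<bar>pdm \<alpha> v x\<bar>) ` \<Omega>)" by (intro bdd_aboveI2) auto
  then show le_SUP: "\<And>x. x \<in> \<Omega> \<Longrightarrow> \<bar>pdm \<alpha> v x\<bar> \<le> (SUP x\<in>\<Omega>. \<bar>pdm \<alpha> v x\<bar>)"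
    by (rule cSUP_upper2) auto
  from assms(1) obtain x where "x \<in> \<Omega>" by blast
  then show "0 \<le> (SUP x\<in>\<Omega>. \<bar>pdm \<alpha> v x\<bar>)" using le_SUP[of x] by linarith
  show "(SUP x\<in>\<Omega>. \<bar>pdm \<alpha> v x\<bar>) \<le> B" using assms(1) le_B by (intro cSUP_least) auto
qed

lemma Cq_norm_nonneg:
  assumes "bounded \<Omega>" "\<Omega> \<noteq> {}" "Cq \<Omega> q v"
  shows "0 \<le> Cq_norm \<Omega> q v"
  unfolding Cq_norm_def
proof (intro sum_nonneg mult_nonneg_nonneg)
  fix \<alpha> :: "'a \<Rightarrow> nat" assume "\<alpha> \<in> multi_idx q"
  show "0 \<le> 1 / mi_fact \<alpha>" using mi_fact_ge_1[of \<alpha>] by simp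
  obtain M where "pds_bounded \<Omega> q v M" using Cq_pds_bounded[OF assms(1,3)] .
  from pdm_SUP_bounds(2)[OF assms(2) \<open>\<alpha> \<in> _\<close> this] show "0 \<le> (SUP x\<in>\<Omega>. \<bar>pdm \<alpha> v x\<bar>)" .
qed

lemma Cq_norm_le:
  fixes v :: "'a::euclidean_space \<Rightarrow> real"
  assumes "\<Omega> \<noteq> {}" "pds_bounded \<Omega> q v B"
  shows "Cq_norm \<Omega> q v \<le> real (card (multi_idx q :: ('a \<Rightarrow> nat) set)) * B"
  unfolding Cq_norm_def
proof (rule sum_bounded_above)
  fix \<alpha> :: "'a \<Rightarrow> nat" assume "\<alpha> \<in> multi_idx q"
  note SUP = pdm_SUP_bounds[OF assms(1) this assms(2)]
  have "1 / mi_fact \<alpha> \<le> 1" using mi_fact_ge_1[of \<alpha>] by simp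
  then have "1 / mi_fact \<alpha> * (SUP x\<in>\<Omega>. \<bar>pdm \<alpha> v x\<bar>) \<le> 1 * (SUP x\<in>\<Omega>. \<bar>pdm \<alpha> v x\<bar>)"
    using SUP(2) by (rule mult_right_mono)
  then show "1 / mi_fact \<alpha> * (SUP x\<in>\<Omega>. \<bar>pdm \<alpha> v x\<bar>) \<le> B" using SUP(3) by simp
qed

text \<open>The C^q norm only sees one ordering of each multi-index; the symmetry of second
  derivatives makes it control the derivatives taken in any order.\<close>
lemma mi_fact_count_list_le:
  fixes bs :: "'a::euclidean_space list"
  assumes "length bs \<le> q"
  shows "mi_fact (count_list bs) \<le> fact q ^ DIM('a)"
proof -
  have "(fact (count_list bs b) :: real) \<le> fact q" for b :: 'a
    using count_le_length[of bs b] assms by (intro fact_mono) linarith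
  then have "mi_fact (count_list bs) \<le> (\<Prod>b\<in>(Basis::'a set). fact q)"
    unfolding mi_fact_def by (intro prod_mono) auto
  then show ?thesis by simp
qed

lemma pds_bounded_Cq_norm:
  assumes "open \<Omega>" "bounded \<Omega>" "\<Omega> \<noteq> {}" "Cq \<Omega> q u"
  shows "pds_bounded \<Omega> q u (fact q ^ DIM('a) * Cq_norm \<Omega> q (u :: 'a::euclidean_space \<Rightarrow> real))"
  unfolding pds_bounded_def
proof (intro allI impI ballI)
  fix bs :: "'a list" and x assume bs: "set bs \<subseteq> Basis \<and> length bs \<le> q" and x: "x \<in> \<Omega>"
  obtain M where M: "pds_bounded \<Omega> q u M" using Cq_pds_bounded[OF assms(2,4)] .
  let ?\<alpha> = "count_list bs"
  let ?S = "SUP x\<in>\<Omega>. \<bar>pdm ?\<alpha> u x\<bar>"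
  have "\<forall>b. b \<notin> Basis \<longrightarrow> ?\<alpha> b = 0" using bs by (auto simp: count_list_0_iff)
  moreover have "sum ?\<alpha> Basis = length bs" using bs by (intro sum_count_set) auto
  ultimately have \<alpha>: "?\<alpha> \<in> multi_idx q" using bs by (simp add: multi_idx_def)
  obtain cs where "set cs \<subseteq> Basis" "length cs \<le> q" and
    cs: "\<forall>b. count_list cs b = ?\<alpha> b" "pdm ?\<alpha> = pds cs"
    using pdm_eq_pds[OF \<alpha>] by blast
  have "mset cs = mset bs" using cs(1) by (intro multiset_eqI) (simp add: count_mset)
  then have "pds cs u x = pds bs u x" using bs by (intro Cq_pds_mset_eq[OF assms(1,4) _ _ _ x]) auto
  then have "\<bar>pds bs u x\<bar> = \<bar>pdm ?\<alpha> u x\<bar>" using cs(2) by simp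
  also have "\<dots> \<le> ?S" by (rule pdm_SUP_bounds(1)[OF assms(3) \<alpha> M x])
  also have "\<dots> = mi_fact ?\<alpha> * (1 / mi_fact ?\<alpha> * ?S)"
    using mi_fact_ge_1[of ?\<alpha>] by simp
  also have "\<dots> \<le> fact q ^ DIM('a) * Cq_norm \<Omega> q u"
  proof (rule mult_mono)
    show "mi_fact ?\<alpha> \<le> fact q ^ DIM('a)" using mi_fact_count_list_le[of bs q] bs by blast
    have "0 \<le> 1 / mi_fact \<beta> * (SUP x\<in>\<Omega>. \<bar>pdm \<beta> u x\<bar>)" if "\<beta> \<in> multi_idx q - {?\<alpha>}" for \<beta>
      using mi_fact_ge_1[of \<beta>] pdm_SUP_bounds(2)[OF assms(3) DiffD1[OF that] M] by simp
    then show "1 / mi_fact ?\<alpha> * ?S \<le> Cq_norm \<Omega> q u"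
      unfolding Cq_norm_def by (rule member_le_sum[OF \<alpha> _ finite_multi_idx])
    show "0 \<le> 1 / mi_fact ?\<alpha> * ?S"
      using mi_fact_ge_1[of ?\<alpha>] pdm_SUP_bounds(2)[OF assms(3) \<alpha> M] by simp
  qed simp
  finally show "\<bar>pds bs u x\<bar> \<le> fact q ^ DIM('a) * Cq_norm \<Omega> q u" .
qed

lemma continuous_on_sum_list:
  fixes F :: "'b \<Rightarrow> 'a::topological_space \<Rightarrow> real"
  shows "(\<And>y. y \<in> set ys \<Longrightarrow> continuous_on S (F y)) \<Longrightarrow> continuous_on S (\<lambda>x. \<Sum>y\<leftarrow>ys. F y x)"
  by (induction ys) (auto intro!: continuous_on_add)

lemma Cq_pds_mult:
  assumes "open \<Omega>" "Cq \<Omega> q f" "Cq \<Omega> q g" "set bs \<subseteq> Basis" "length bs \<le> q"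
  shows "pds_exist \<Omega> bs (\<lambda>x. f x * g x)"
    and "\<And>x. x \<in> \<Omega> \<Longrightarrow> pds bs (\<lambda>x. f x * g x) x = (\<Sum>(l, r)\<leftarrow>splits bs. pds l f x * pds r g x)"
proof -
  have "pds_exist \<Omega> l f \<and> pds_exist \<Omega> l g" if "mset l \<subseteq># mset bs" for l
  proof -
    have "set l \<subseteq> Basis" "length l \<le> q"
      using set_mset_mono[OF that] size_mset_mono[OF that] assms(4,5) by auto
    then show ?thesis using Cq_pds_exist[OF assms(2)] Cq_pds_exist[OF assms(3)] by blast
  qed
  from pds_mult[OF assms(1) this] show "pds_exist \<Omega> bs (\<lambda>x. f x * g x)"
    "\<And>x. x \<in> \<Omega> \<Longrightarrow> pds bs (\<lambda>x. f x * g x) x = (\<Sum>(l, r)\<leftarrow>splits bs. pds l f x * pds r g x)"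
    by auto
qed

lemma splits_admissible:
  assumes "(l, r) \<in> set (splits bs)" "set bs \<subseteq> Basis" "length bs \<le> q"
  shows "set l \<subseteq> Basis \<and> length l \<le> q \<and> set r \<subseteq> Basis \<and> length r \<le> q"
proof -
  have "mset l \<subseteq># mset bs" "mset r \<subseteq># mset bs"
    by (simp_all flip: mset_splits[OF assms(1)])
  from this[THEN set_mset_mono] this[THEN size_mset_mono] assms(2,3) show ?thesis by auto
qed

lemma Cq_mult:
  assumes "open \<Omega>" "Cq \<Omega> q f" "Cq \<Omega> q g"
  shows "Cq \<Omega> q (\<lambda>x. f x * g x)"
  unfolding Cq_alt
proof (intro conjI allI impI)
  show "continuous_on (closure \<Omega>) (\<lambda>x. f x * g x)"
    using assms(2,3) unfolding Cq_alt by (auto intro: continuous_on_mult)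
  fix bs :: "'a list" assume bs: "set bs \<subseteq> Basis \<and> length bs \<le> q"
  then show "pds_exist \<Omega> bs (\<lambda>x. f x * g x)" using Cq_pds_mult(1)[OF assms] by blast
  obtain F where F: "\<And>l. set l \<subseteq> Basis \<Longrightarrow> length l \<le> q \<Longrightarrow>
      continuous_on (closure \<Omega>) (F l) \<and> (\<forall>x\<in>\<Omega>. F l x = pds l f x)"
    using Cq_pds_extension[OF assms(2)] by metis
  obtain G where G: "\<And>r. set r \<subseteq> Basis \<Longrightarrow> length r \<le> q \<Longrightarrow>
      continuous_on (closure \<Omega>) (G r) \<and> (\<forall>x\<in>\<Omega>. G r x = pds r g x)"
    using Cq_pds_extension[OF assms(3)] by metis
  have adm: "set (fst lr) \<subseteq> Basis \<and> length (fst lr) \<le> q \<and> set (snd lr) \<subseteq> Basis \<and> length (snd lr) \<le> q"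
    if "lr \<in> set (splits bs)" for lr
    using splits_admissible[of "fst lr" "snd lr" bs q] that bs by simp
  let ?H = "\<lambda>x. \<Sum>lr\<leftarrow>splits bs. F (fst lr) x * G (snd lr) x"
  have "continuous_on (closure \<Omega>) ?H"
    by (intro continuous_on_sum_list continuous_on_mult) (use F G adm in blast)+
  moreover have "?H x = pds bs (\<lambda>x. f x * g x) x" if "x \<in> \<Omega>" for x
  proof -
    have "?H x = (\<Sum>lr\<leftarrow>splits bs. pds (fst lr) f x * pds (snd lr) g x)"
      using F G adm that by (intro arg_cong[where f = sum_list] map_cong) auto
    then show ?thesis using Cq_pds_mult(2)[OF assms, of bs x] bs that by (simp add: case_prod_beta')
  qed
  ultimately show "\<exists>H. continuous_on (closure \<Omega>) H \<and> (\<forall>x\<in>\<Omega>. H x = pds bs (\<lambda>x. f x * g x) x)"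
    by blast
qed

lemma pds_bounded_mult:
  assumes "open \<Omega>" "Cq \<Omega> q f" "Cq \<Omega> q g" "pds_bounded \<Omega> q f Mf" "pds_bounded \<Omega> q g Mg"
  shows "pds_bounded \<Omega> q (\<lambda>x. f x * g x) (2 ^ q * (Mf * Mg))"
  unfolding pds_bounded_def
proof (intro allI impI ballI)
  fix bs :: "'a list" and x assume bs: "set bs \<subseteq> Basis \<and> length bs \<le> q" and x: "x \<in> \<Omega>"
  have "0 \<le> Mf" "0 \<le> Mg"
    using pds_boundedD[OF assms(4), of "[]" x] pds_boundedD[OF assms(5), of "[]" x] x by auto
  have le: "\<bar>pds (fst lr) f x * pds (snd lr) g x\<bar> \<le> Mf * Mg" if "lr \<in> set (splits bs)" for lr
    unfolding abs_mult using splits_admissible[of "fst lr" "snd lr" bs q] that bs x \<open>0 \<le> Mf\<close>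
    by (intro mult_mono pds_boundedD[OF assms(4)] pds_boundedD[OF assms(5)]) auto
  have "\<bar>pds bs (\<lambda>x. f x * g x) x\<bar> = \<bar>\<Sum>lr\<leftarrow>splits bs. pds (fst lr) f x * pds (snd lr) g x\<bar>"
    using Cq_pds_mult(2)[OF assms(1-3)] bs x by (simp add: case_prod_beta')
  also have "\<dots> \<le> (\<Sum>lr\<leftarrow>splits bs. \<bar>pds (fst lr) f x * pds (snd lr) g x\<bar>)"
    using sum_list_abs[of "map (\<lambda>lr. pds (fst lr) f x * pds (snd lr) g x) (splits bs)"]
    by (simp add: o_def)
  also have "\<dots> \<le> (\<Sum>lr\<leftarrow>splits bs. Mf * Mg)" using le by (rule sum_list_mono)
  also have "\<dots> = length (splits bs) * (Mf * Mg)" by (simp add: sum_list_triv)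
  also have "\<dots> \<le> 2 ^ q * (Mf * Mg)"
    using bs \<open>0 \<le> Mf\<close> \<open>0 \<le> Mg\<close>
    by (intro mult_right_mono) (simp_all add: length_splits power_increasing)
  finally show "\<bar>pds bs (\<lambda>x. f x * g x) x\<bar> \<le> 2 ^ q * (Mf * Mg)" .
qed

lemma pds_compose_affine:
  fixes H :: "'b::euclidean_space \<Rightarrow> real" and p :: "'a::euclidean_space \<Rightarrow> 'b"
  assumes S: "open S" and p: "\<And>x t b. p (x + t *\<^sub>R b) = p x + t *\<^sub>R L b" and "p ` S \<subseteq> T"
  shows "pds_exist T (map L bs) H \<Longrightarrow>
    pds_exist S bs (\<lambda>x. H (p x)) \<and> (\<forall>x\<in>S. pds bs (\<lambda>x. H (p x)) x = pds (map L bs) H (p x))"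
proof (induction bs)
  case (Cons b bs)
  then have IH: "pds_exist S bs (\<lambda>x. H (p x))"
    "\<And>x. x \<in> S \<Longrightarrow> pds bs (\<lambda>x. H (p x)) x = pds (map L bs) H (p x)"
    by auto
  have along_p: "has_pd b (\<lambda>x. G (p x)) x = has_pd (L b) G (p x)"
    "pd b (\<lambda>x. G (p x)) x = pd (L b) G (p x)" for G :: "'b \<Rightarrow> real" and x
    unfolding has_pd_def pd_def p by simp_all
  have "has_pd b (pds bs (\<lambda>x. H (p x))) x \<and>
      pd b (pds bs (\<lambda>x. H (p x))) x = pd (L b) (pds (map L bs) H) (p x)" if x: "x \<in> S" for x
    using pd_cong[OF S x, of "pds bs (\<lambda>x. H (p x))" "\<lambda>x. pds (map L bs) H (p x)" b] IH(2)
      along_p Cons.prems assms(3) x by auto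
  then show ?case using IH by simp
qed simp

lemma Cq_compose_affine:
  fixes H :: "'b::euclidean_space \<Rightarrow> real" and p :: "'a::euclidean_space \<Rightarrow> 'b"
  assumes "open S" "\<And>x t b. p (x + t *\<^sub>R b) = p x + t *\<^sub>R L b" "p ` S \<subseteq> T"
    and p_cont: "continuous_on (closure S) p" and L: "L ` Basis \<subseteq> Basis" and H: "Cq T q H"
  shows "Cq S q (\<lambda>x. H (p x))"
  unfolding Cq_alt
proof (intro conjI allI impI)
  have p_closure: "p ` closure S \<subseteq> closure T"
    using assms(3) by (intro image_closure_subset[OF p_cont]) (auto intro: closure_subset[THEN subsetD])
  have cont: "continuous_on (closure S) (\<lambda>x. G (p x))" if "continuous_on (closure T) G"
    for G :: "'b \<Rightarrow> real"
    by (rule continuous_on_compose2[OF that p_cont p_closure])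
  show "continuous_on (closure S) (\<lambda>x. H (p x))" using H unfolding Cq_alt by (blast intro: cont)
  fix bs :: "'a list" assume bs: "set bs \<subseteq> Basis \<and> length bs \<le> q"
  then have Lbs: "set (map L bs) \<subseteq> Basis" "length (map L bs) \<le> q" using L by auto
  note comp = pds_compose_affine[OF assms(1-3) Cq_pds_exist[OF H Lbs]]
  then show "pds_exist S bs (\<lambda>x. H (p x))" by blast
  obtain G where "continuous_on (closure T) G" "\<forall>y\<in>T. G y = pds (map L bs) H y"
    using Cq_pds_extension[OF H Lbs] by blast
  then show "\<exists>g. continuous_on (closure S) g \<and> (\<forall>x\<in>S. g x = pds bs (\<lambda>x. H (p x)) x)"
    using comp assms(3) by (intro exI[of _ "\<lambda>x. G (p x)"]) (auto intro: cont)
qed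

lemma pds_bounded_compose_affine:
  fixes H :: "'b::euclidean_space \<Rightarrow> real" and p :: "'a::euclidean_space \<Rightarrow> 'b"
  assumes "open S" "\<And>x t b. p (x + t *\<^sub>R b) = p x + t *\<^sub>R L b" "p ` S \<subseteq> T"
    and L: "L ` Basis \<subseteq> Basis" and H: "Cq T q H" "pds_bounded T q H M"
  shows "pds_bounded S q (\<lambda>x. H (p x)) M"
  unfolding pds_bounded_def
proof (intro allI impI ballI)
  fix bs :: "'a list" and x assume bs: "set bs \<subseteq> Basis \<and> length bs \<le> q" and x: "x \<in> S"
  then have Lbs: "set (map L bs) \<subseteq> Basis" "length (map L bs) \<le> q" using L by auto
  have "pds bs (\<lambda>x. H (p x)) x = pds (map L bs) H (p x)"
    using pds_compose_affine[OF assms(1-3) Cq_pds_exist[OF H(1) Lbs]] x by blast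
  then show "\<bar>pds bs (\<lambda>x. H (p x)) x\<bar> \<le> M"
    using pds_boundedD[OF H(2) Lbs] x assms(3) by auto
qed

section \<open>Integrals over a bounded open set\<close>

lemma integrable_continuous_closure:
  fixes f :: "'a::euclidean_space \<Rightarrow> real"
  assumes "bounded \<Omega>" "open \<Omega>" "continuous_on (closure \<Omega>) f"
  shows "f integrable_on \<Omega>"
proof -
  have \<Omega>: "\<Omega> \<in> lmeasurable" by (rule lmeasurable_open[OF assms(1,2)])
  have "continuous_on \<Omega> f" using assms(3) closure_subset continuous_on_subset by blast
  then have meas: "f \<in> borel_measurable (lebesgue_on \<Omega>)"
    using \<Omega> by (intro continuous_imp_measurable_on_sets_lebesgue) auto
  have "compact (f ` closure \<Omega>)"
    using assms(1,3) by (intro compact_continuous_image) auto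
  then obtain B where B: "\<forall>y\<in>f ` closure \<Omega>. norm y \<le> B"
    using compact_imp_bounded bounded_iff by metis
  show ?thesis
  proof (rule measurable_bounded_by_integrable_imp_integrable_real[OF meas])
    show "(\<lambda>x. B) integrable_on \<Omega>" by (rule integrable_on_const[OF \<Omega>])
    show "\<And>x. x \<in> \<Omega> \<Longrightarrow> \<bar>f x\<bar> \<le> B" using B closure_subset by fastforce
  qed (use \<Omega> in auto)
qed

lemma abs_integral_le_measure:
  fixes f :: "'a::euclidean_space \<Rightarrow> real"
  assumes "bounded \<Omega>" "open \<Omega>" "f integrable_on \<Omega>" "\<And>x. x \<in> \<Omega> \<Longrightarrow> \<bar>f x\<bar> \<le> c"
  shows "\<bar>integral \<Omega> f\<bar> \<le> c * measure lebesgue \<Omega>"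
proof -
  have \<Omega>: "\<Omega> \<in> lmeasurable" by (rule lmeasurable_open[OF assms(1,2)])
  have "norm (integral \<Omega> f) \<le> integral \<Omega> (\<lambda>x. c)"
    using assms(4) by (intro integral_norm_bound_integral[OF assms(3) integrable_on_const[OF \<Omega>]]) auto
  also have "integral \<Omega> (\<lambda>x. c) = c * measure lebesgue \<Omega>"
    using lmeasure_integral[OF \<Omega>] integral_mult[OF integrable_on_const[OF \<Omega>], of c 1] by simp
  finally show ?thesis by simp
qed

lemma continuous_on_integral_param:
  fixes F :: "'p::topological_space \<times> 'a::euclidean_space \<Rightarrow> real"
  assumes \<Omega>: "bounded \<Omega>" "open \<Omega>" and F: "continuous_on (T \<times> closure \<Omega>) F"
  shows "continuous_on T (\<lambda>p. integral \<Omega> (\<lambda>z. F (p, z)))"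
  unfolding continuous_on_def
proof (intro ballI tendstoI)
  fix p and e :: real assume p: "p \<in> T" and "0 < e"
  let ?\<mu> = "measure lebesgue \<Omega>"
  define e' where "e' = e / (?\<mu> + 1)"
  have "0 < ?\<mu> + 1" by (simp add: add_nonneg_pos)
  then have e': "0 < e'" "e' * ?\<mu> < e"
    using \<open>0 < e\<close> unfolding e'_def by (simp_all add: field_simps)
  have int: "(\<lambda>z. F (p', z)) integrable_on \<Omega>" if "p' \<in> T" for p'
    using that by (intro integrable_continuous_closure[OF \<Omega>] continuous_on_compose2[OF F]
      continuous_intros) auto
  obtain X where X: "p \<in> X" "open X" "\<forall>p'\<in>X \<inter> T. \<forall>z\<in>closure \<Omega>. dist (F (p', z)) (F (p, z)) \<le> e'"
    by (rule continuous_on_prod_compactE[OF F compact_closure[THEN iffD2, OF \<Omega>(1)] p e'(1)])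
  have "\<forall>\<^sub>F p' in at p within T. p' \<in> X \<inter> T"
    using X(1,2) eventually_at_topological by auto
  then show "\<forall>\<^sub>F p' in at p within T.
      dist (integral \<Omega> (\<lambda>z. F (p', z))) (integral \<Omega> (\<lambda>z. F (p, z))) < e"
  proof eventually_elim
    case (elim p')
    have "\<bar>integral \<Omega> (\<lambda>z. F (p', z) - F (p, z))\<bar> \<le> e' * ?\<mu>"
      using X(3) elim closure_subset int p
      by (intro abs_integral_le_measure[OF \<Omega>] integrable_diff) (auto simp: dist_real_def)
    then show ?case using e'(2) integral_diff[OF int int] elim p by (simp add: dist_real_def)
  qed
qed

lemma continuous_on_Kop:
  assumes "bounded \<Omega>" "open \<Omega>" "continuous_on (closure \<Omega> \<times> closure \<Omega>) k"
    and "continuous_on (closure \<Omega>) v"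
  shows "continuous_on (closure \<Omega>) (Kop \<Omega> k v)"
proof -
  have "continuous_on (closure \<Omega> \<times> closure \<Omega>) (\<lambda>(x, z). k (x, z) * v z)"
    unfolding case_prod_beta'
    by (intro continuous_on_mult continuous_on_compose2[OF assms(4)] continuous_on_compose2[OF assms(3)]
      continuous_intros) auto
  from continuous_on_integral_param[OF assms(1,2) this] show ?thesis
    unfolding Kop_def by simp
qed

lemma abs_le_sup_norm:
  assumes "bounded \<Omega>" "continuous_on (closure \<Omega>) v" "x \<in> closure \<Omega>"
  shows "\<bar>v x\<bar> \<le> sup_norm \<Omega> v"
proof -
  have "compact (v ` closure \<Omega>)"
    using assms(1,2) by (intro compact_continuous_image) auto
  then obtain B where "\<forall>y\<in>v ` closure \<Omega>. norm y \<le> B"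
    using compact_imp_bounded bounded_iff by metis
  then have "bdd_above ((\<lambda>x. \<bar>v x\<bar>) ` closure \<Omega>)" by (intro bdd_aboveI2[of _ _ B]) auto
  then show ?thesis unfolding sup_norm_def using assms(3) by (rule cSUP_upper2) auto
qed

lemma sup_norm_le:
  assumes "\<Omega> \<noteq> {}" "\<And>x. x \<in> closure \<Omega> \<Longrightarrow> \<bar>v x\<bar> \<le> B"
  shows "sup_norm \<Omega> v \<le> B"
  unfolding sup_norm_def using assms closure_subset by (intro cSUP_least) auto

lemma abs_sum_mult_le:
  fixes w a :: "nat \<Rightarrow> real"
  assumes "(\<Sum>i<n. \<bar>w i\<bar>) \<le> W" "\<And>i. i < n \<Longrightarrow> \<bar>a i\<bar> \<le> A" "0 \<le> A"
  shows "\<bar>\<Sum>i<n. w i * a i\<bar> \<le> W * A"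
proof -
  have "\<bar>\<Sum>i<n. w i * a i\<bar> \<le> (\<Sum>i<n. \<bar>w i\<bar> * A)"
    using assms(2) by (intro order_trans[OF sum_abs] sum_mono) (simp add: abs_mult mult_left_mono)
  also have "\<dots> \<le> W * A" using assms(1,3) by (simp add: sum_distrib_right[symmetric] mult_right_mono)
  finally show ?thesis .
qed

section \<open>Stable linear systems\<close>

definition stable_system :: "nat \<Rightarrow> (nat \<Rightarrow> nat \<Rightarrow> real) \<Rightarrow> real \<Rightarrow> bool" where
  "stable_system n A D \<longleftrightarrow> (\<forall>v g G. (\<forall>i<n. (\<Sum>j<n. A i j * v j) = g i) \<longrightarrow>
     (\<forall>i<n. \<bar>g i\<bar> \<le> G) \<longrightarrow> (\<forall>i<n. \<bar>v i\<bar> \<le> D * G))"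

lemma stable_systemD:
  "stable_system n A D \<Longrightarrow> (\<And>i. i < n \<Longrightarrow> (\<Sum>j<n. A i j * v j) = g i) \<Longrightarrow>
    (\<And>i. i < n \<Longrightarrow> \<bar>g i\<bar> \<le> G) \<Longrightarrow> i < n \<Longrightarrow> \<bar>v i\<bar> \<le> D * G"
  unfolding stable_system_def by blast

lemma stable_system_injective:
  "stable_system n A D \<Longrightarrow> (\<And>i. i < n \<Longrightarrow> (\<Sum>j<n. A i j * v j) = 0) \<Longrightarrow> i < n \<Longrightarrow> v i = 0"
  using stable_systemD[of n A D v "\<lambda>_. 0" 0 i] by simp

lemma stable_system_is_inverse:
  assumes "stable_system n A D"
  obtains B where "is_inverse n A B"
proof -
  define M where "M = mat n n (\<lambda>(i, j). A i j)"
  have M: "M \<in> carrier_mat n n" unfolding M_def by simp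
  have "Determinant.det M \<noteq> 0"
  proof
    assume "Determinant.det M = 0"
    then obtain v where v: "v \<in> carrier_vec n" "v \<noteq> 0\<^sub>v n" "M *\<^sub>v v = 0\<^sub>v n"
      using det_0_iff_vec_prod_zero_field[OF M] by blast
    have "(\<Sum>j<n. A i j * vec_index v j) = vec_index (M *\<^sub>v v) i" if "i < n" for i
      using that v(1) unfolding M_def by (simp add: scalar_prod_def atLeast0LessThan)
    then have "(\<Sum>j<n. A i j * vec_index v j) = 0" if "i < n" for i
      using v(3) that by simp
    then have "v = 0\<^sub>v n"
      using stable_system_injective[OF assms] v(1) by (intro eq_vecI) auto
    with v(2) show False ..
  qed
  then have "M \<in> Units (ring_mat TYPE(real) n ())" by (rule det_non_zero_imp_unit[OF M])
  then obtain B where B: "B \<in> carrier_mat n n" "M * B = 1\<^sub>m n" "B * M = 1\<^sub>m n"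
    unfolding Units_def by (auto simp: ring_mat_simps)
  have "(M * B) $$ (i, j) = mat_mult n A (\<lambda>i j. B $$ (i, j)) i j"
    "(B * M) $$ (i, j) = mat_mult n (\<lambda>i j. B $$ (i, j)) A i j" if "i < n" "j < n" for i j
    using that B(1) unfolding M_def mat_mult_def by (simp_all add: scalar_prod_def atLeast0LessThan)
  then show ?thesis using B(2,3) by (intro that[of "\<lambda>i j. B $$ (i, j)"]) (auto simp: is_inverse_def)
qed

lemma is_inverse_solves:
  assumes "is_inverse n A B" "i < n"
  shows "(\<Sum>l<n. A i l * (\<Sum>j<n. B l j * g j)) = g i"
proof -
  have "(\<Sum>l<n. A i l * (\<Sum>j<n. B l j * g j)) = (\<Sum>j<n. mat_mult n A B i j * g j)"
    unfolding mat_mult_def sum_distrib_left sum_distrib_right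
    by (subst sum.swap) (simp add: mult_ac)
  also have "\<dots> = (\<Sum>j<n. if i = j then g j else 0)"
    using assms unfolding is_inverse_def by (intro sum.cong) auto
  finally show ?thesis using assms(2) by simp
qed

lemma stable_system_unique_solution:
  assumes "stable_system n A D"
  shows "\<exists>v. (\<forall>i<n. (\<Sum>j<n. A i j * v j) = g i) \<and>
    (\<forall>v'. (\<forall>i<n. (\<Sum>j<n. A i j * v' j) = g i) \<longrightarrow> (\<forall>i<n. v' i = v i))"
proof -
  obtain B where B: "is_inverse n A B" using stable_system_is_inverse[OF assms] .
  define v where "v = (\<lambda>l. \<Sum>j<n. B l j * g j)"
  have v: "\<forall>i<n. (\<Sum>j<n. A i j * v j) = g i" unfolding v_def using is_inverse_solves[OF B] by blast
  moreover have "v' i = v i" if "\<forall>i<n. (\<Sum>j<n. A i j * v' j) = g i" "i < n" for v' i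
    using stable_system_injective[OF assms, of "\<lambda>j. v' j - v j" i] that v
    by (simp add: right_diff_distrib sum_subtractf)
  ultimately show ?thesis by blast
qed

lemma norm_inf_le:
  assumes "0 < n" "\<And>i. i < n \<Longrightarrow> (\<Sum>j<n. \<bar>A i j\<bar>) \<le> R"
  shows "norm_inf n A \<le> R" and "0 \<le> norm_inf n A"
proof -
  show "norm_inf n A \<le> R" unfolding norm_inf_def using assms by (subst Max_le_iff) auto
  have "(\<Sum>j<n. \<bar>A 0 j\<bar>) \<le> norm_inf n A" unfolding norm_inf_def using assms(1) by (intro Max_ge) auto
  then show "0 \<le> norm_inf n A" by (meson order_trans sum_nonneg abs_ge_zero)
qed

text \<open>The i-th row sum of the inverse B is the i-th entry of the solution whose right-hand side
  is the sign pattern of the i-th row of B.\<close>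
lemma norm_inf_inverse_le:
  assumes "stable_system n A D" "is_inverse n A B" "0 < n"
  shows "norm_inf n B \<le> D" "0 \<le> norm_inf n B"
proof -
  have rows: "(\<Sum>j<n. \<bar>B i j\<bar>) \<le> D" if i: "i < n" for i
  proof -
    have "\<bar>\<Sum>j<n. B i j * sgn (B i j)\<bar> \<le> D * 1"
      using is_inverse_solves[OF assms(2)] i
      by (intro stable_systemD[OF assms(1), of "\<lambda>l. \<Sum>j<n. B l j * sgn (B i j)" "\<lambda>j. sgn (B i j)"])
        (auto simp: abs_sgn_eq)
    moreover have "B i j * sgn (B i j) = \<bar>B i j\<bar>" for j by (simp add: abs_if sgn_if)
    ultimately show ?thesis by (simp add: sum_nonneg)
  qed
  show "norm_inf n B \<le> D" "0 \<le> norm_inf n B" using norm_inf_le[OF assms(3) rows] by auto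
qed

lemma cond_inf_le:
  assumes "stable_system n A D" "0 < n" "\<And>i. i < n \<Longrightarrow> (\<Sum>j<n. \<bar>A i j\<bar>) \<le> R"
  shows "cond_inf n A \<le> R * D"
proof -
  obtain B where "is_inverse n A B" using stable_system_is_inverse[OF assms(1)] .
  then have "is_inverse n A (SOME B. is_inverse n A B)" by (rule someI[of "is_inverse n A"])
  from norm_inf_inverse_le[OF assms(1) this assms(2)] norm_inf_le[of n A R, OF assms(2,3)]
  show ?thesis unfolding cond_inf_def by (intro mult_mono) auto
qed

section \<open>Quadrature rules and the Nystrom method\<close>

definition quad_error_le :: "'a::euclidean_space set \<Rightarrow> nat \<Rightarrow> nat \<Rightarrow> (nat \<Rightarrow> 'a) \<Rightarrow> (nat \<Rightarrow> real) \<Rightarrow> real \<Rightarrow> bool" where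
  "quad_error_le \<Omega> q n yy ww \<epsilon> \<longleftrightarrow>
     (\<forall>v. Cq \<Omega> q v \<longrightarrow> \<bar>integral \<Omega> v - (\<Sum>i<n. ww i * v (yy i))\<bar> \<le> \<epsilon> * Cq_norm \<Omega> q v)"

lemma quad_error_le_mult:
  fixes f g :: "'a::euclidean_space \<Rightarrow> real"
  assumes quad: "quad_error_le \<Omega> q n yy ww \<epsilon>" "0 \<le> \<epsilon>" and \<Omega>: "open \<Omega>" "\<Omega> \<noteq> {}"
    and f: "Cq \<Omega> q f" "pds_bounded \<Omega> q f Mf" and g: "Cq \<Omega> q g" "pds_bounded \<Omega> q g Mg"
  shows "\<bar>integral \<Omega> (\<lambda>x. f x * g x) - (\<Sum>i<n. ww i * (f (yy i) * g (yy i)))\<bar>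
    \<le> \<epsilon> * (real (card (multi_idx q :: ('a \<Rightarrow> nat) set)) * 2 ^ q * Mf * Mg)"
proof -
  have fg: "Cq \<Omega> q (\<lambda>x. f x * g x)" "pds_bounded \<Omega> q (\<lambda>x. f x * g x) (2 ^ q * (Mf * Mg))"
    using Cq_mult[OF \<Omega>(1) f(1) g(1)] pds_bounded_mult[OF \<Omega>(1) f(1) g(1) f(2) g(2)] .
  then have "\<bar>integral \<Omega> (\<lambda>x. f x * g x) - (\<Sum>i<n. ww i * (f (yy i) * g (yy i)))\<bar>
      \<le> \<epsilon> * Cq_norm \<Omega> q (\<lambda>x. f x * g x)"
    using quad(1) unfolding quad_error_le_def by blast
  also have "\<dots> \<le> \<epsilon> * (real (card (multi_idx q :: ('a \<Rightarrow> nat) set)) * (2 ^ q * (Mf * Mg)))"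
    using Cq_norm_le[OF \<Omega>(2) fg(2)] quad(2) by (rule mult_left_mono)
  finally show ?thesis by (simp add: mult_ac)
qed

lemma quad_error_le_mono:
  assumes "quad_error_le \<Omega> q n yy ww \<epsilon>" "\<epsilon> \<le> \<epsilon>'" "bounded \<Omega>" "\<Omega> \<noteq> {}"
  shows "quad_error_le \<Omega> q n yy ww \<epsilon>'"
  unfolding quad_error_le_def
proof (intro allI impI)
  fix v assume v: "Cq \<Omega> q v"
  have "\<epsilon> * Cq_norm \<Omega> q v \<le> \<epsilon>' * Cq_norm \<Omega> q v"
    using Cq_norm_nonneg[OF assms(3,4) v] assms(2) by (rule mult_right_mono[rotated])
  then show "\<bar>integral \<Omega> v - (\<Sum>i<n. ww i * v (yy i))\<bar> \<le> \<epsilon>' * Cq_norm \<Omega> q v"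
    using assms(1) v unfolding quad_error_le_def by (meson order_trans)
qed

lemma quad_order_error_le:
  assumes "quad_order \<Omega> q N y w" "bounded \<Omega>" "\<Omega> \<noteq> {}"
  obtains Cw where "0 < Cw" "\<And>h. 0 < h \<Longrightarrow> quad_error_le \<Omega> q (N h) (y h) (w h) (Cw * h ^ q)"
proof -
  obtain Cw where "\<forall>h>0. \<forall>v. Cq \<Omega> q v \<longrightarrow>
      \<bar>integral \<Omega> v - (\<Sum>i<N h. w h i * v (y h i))\<bar> \<le> Cw * h ^ q * Cq_norm \<Omega> q v"
    using assms(1) unfolding quad_order_def by blast
  then have "quad_error_le \<Omega> q (N h) (y h) (w h) (Cw * h ^ q)" if "0 < h" for h
    using that unfolding quad_error_le_def by blast
  moreover have "Cw * h ^ q \<le> max Cw 1 * h ^ q" if "0 < h" for h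
    using that by (intro mult_right_mono) auto
  ultimately have "quad_error_le \<Omega> q (N h) (y h) (w h) (max Cw 1 * h ^ q)" if "0 < h" for h
    using that quad_error_le_mono[OF _ _ assms(2,3)] by blast
  then show ?thesis by (intro that[of "max Cw 1"]) auto
qed

lemma quad_scheme_nonempty:
  assumes "quad_scheme \<Omega> N y"
  shows "\<Omega> \<noteq> {}"
proof -
  have "\<forall>\<^sub>F h in at_right 0. 1 \<le> N h"
    using assms unfolding quad_scheme_def filterlim_at_top by blast
  then obtain b where "0 < b" and b: "\<And>h. 0 < h \<Longrightarrow> h < b \<Longrightarrow> 1 \<le> N h"
    by (auto simp: eventually_at_right_field)
  have "0 < b / 2" "0 < N (b / 2)" using b[of "b / 2"] \<open>0 < b\<close> by linarith+
  then have "y (b / 2) 0 \<in> closure \<Omega>" using assms unfolding quad_scheme_def by blast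
  then show ?thesis by auto
qed

lemma not_in_spectrum_resolvent_bound:
  assumes "not_in_spectrum \<Omega> k lam" "bounded \<Omega>" "open \<Omega>" "\<Omega> \<noteq> {}"
    and "continuous_on (closure \<Omega> \<times> closure \<Omega>) k"
  obtains Cs where "0 \<le> Cs" "\<And>v. continuous_on (closure \<Omega>) v \<Longrightarrow>
    sup_norm \<Omega> v \<le> Cs * sup_norm \<Omega> (\<lambda>x. lam * v x - Kop \<Omega> k v x)"
proof -
  obtain Cs where Cs: "\<And>v. continuous_on (closure \<Omega>) v \<Longrightarrow>
      sup_norm \<Omega> v \<le> Cs * sup_norm \<Omega> (\<lambda>x. lam * v x - Kop \<Omega> k v x)"
    using assms(1) unfolding not_in_spectrum_def by blast
  obtain x where x: "x \<in> closure \<Omega>" using assms(4) closure_subset by blast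
  have "sup_norm \<Omega> v \<le> max Cs 0 * sup_norm \<Omega> (\<lambda>x. lam * v x - Kop \<Omega> k v x)"
    if v: "continuous_on (closure \<Omega>) v" for v
  proof -
    have "continuous_on (closure \<Omega>) (\<lambda>x. lam * v x - Kop \<Omega> k v x)"
      using continuous_on_Kop[OF assms(2,3,5) v] v by (intro continuous_intros)
    then have "0 \<le> sup_norm \<Omega> (\<lambda>x. lam * v x - Kop \<Omega> k v x)"
      using abs_le_sup_norm[OF assms(2) _ x] by (meson abs_ge_zero order_trans)
    then show ?thesis using Cs[OF v] by (meson max.cobounded1 mult_right_mono order_trans)
  qed
  then show ?thesis by (intro that[of "max Cs 0"]) auto
qed

lemma quad_scheme_eventually_small:
  assumes "quad_scheme \<Omega> N y" "1 \<le> q" "0 < \<delta>"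
  obtains h0 where "0 < h0" "\<And>h. 0 < h \<Longrightarrow> h < h0 \<Longrightarrow> 0 < N h \<and> c * h ^ q \<le> \<delta>"
proof -
  have "((\<lambda>h. c * h ^ q) \<longlongrightarrow> c * 0 ^ q) (at_right 0)" by (intro tendsto_intros)
  moreover have "c * (0::real) ^ q = 0" using assms(2) by simp
  ultimately have "\<forall>\<^sub>F h in at_right 0. c * h ^ q < \<delta>"
    using assms(3) by (simp add: order_tendstoD(2))
  moreover have "\<forall>\<^sub>F h in at_right 0. 1 \<le> N h"
    using assms(1) unfolding quad_scheme_def filterlim_at_top by blast
  ultimately have "\<forall>\<^sub>F h in at_right 0. 0 < N h \<and> c * h ^ q \<le> \<delta>"
    by eventually_elim auto
  then show ?thesis using that by (auto simp: eventually_at_right_field)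
qed

lemma nys_mat_row:
  assumes "i < n"
  shows "(\<Sum>j<n. nys_mat lam k yy ww i j * v j) = lam * v i - (\<Sum>j<n. ww j * k (yy i, yy j) * v j)"
proof -
  have "nys_mat lam k yy ww i j * v j = (if i = j then lam * v j else 0) - ww j * k (yy i, yy j) * v j" for j
    unfolding nys_mat_def by (simp add: algebra_simps)
  then show ?thesis using assms by (simp add: sum_subtractf)
qed

lemma nys_mat_row_abs_le:
  assumes "i < n" "\<And>j. j < n \<Longrightarrow> \<bar>k (yy i, yy j)\<bar> \<le> M" "(\<Sum>j<n. \<bar>ww j\<bar>) \<le> W"
  shows "(\<Sum>j<n. \<bar>nys_mat lam k yy ww i j\<bar>) \<le> \<bar>lam\<bar> + M * W"
proof -
  have "0 \<le> M" using assms(1,2) by (meson abs_ge_zero order_trans)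
  have "(\<Sum>j<n. \<bar>nys_mat lam k yy ww i j\<bar>) \<le> (\<Sum>j<n. (if i = j then \<bar>lam\<bar> else 0) + M * \<bar>ww j\<bar>)"
  proof (rule sum_mono)
    fix j assume "j \<in> {..<n}"
    then have "\<bar>k (yy i, yy j) * ww j\<bar> \<le> M * \<bar>ww j\<bar>"
      using assms(2) unfolding abs_mult by (intro mult_right_mono) auto
    then show "\<bar>nys_mat lam k yy ww i j\<bar> \<le> (if i = j then \<bar>lam\<bar> else 0) + M * \<bar>ww j\<bar>"
      unfolding nys_mat_def by (cases "i = j") auto
  qed
  also have "\<dots> \<le> \<bar>lam\<bar> + M * W"
    using assms(1,3) \<open>0 \<le> M\<close> by (simp add: sum.distrib sum_distrib_left[symmetric] mult_left_mono)
  finally show ?thesis .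
qed

locale nystrom_problem =
  fixes \<Omega> :: "'a::euclidean_space set" and q :: nat and k :: "'a \<times> 'a \<Rightarrow> real"
    and lam Cs Mk :: real
  assumes open_dom: "open \<Omega>" and bounded_dom: "bounded \<Omega>" and nonempty_dom: "\<Omega> \<noteq> {}"
    and lam_nonzero: "lam \<noteq> 0"
    and kernel_Cq: "Cq (\<Omega> \<times> \<Omega>) q k" and kernel_pds_bounded: "pds_bounded (\<Omega> \<times> \<Omega>) q k Mk"
    and resolvent_nonneg: "0 \<le> Cs"
    and resolvent_bound: "\<And>v. continuous_on (closure \<Omega>) v \<Longrightarrow>
      sup_norm \<Omega> v \<le> Cs * sup_norm \<Omega> (\<lambda>x. lam * v x - Kop \<Omega> k v x)"
begin

lemma kernel_continuous: "continuous_on (closure \<Omega> \<times> closure \<Omega>) k"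
  using kernel_Cq by (simp add: Cq_alt closure_Times)

lemma kernel_bound: "x \<in> closure \<Omega> \<Longrightarrow> y \<in> closure \<Omega> \<Longrightarrow> \<bar>k (x, y)\<bar> \<le> Mk"
  using continuous_on_closure_norm_le[of "\<Omega> \<times> \<Omega>" k Mk "(x, y)"] kernel_continuous
    pds_boundedD[OF kernel_pds_bounded, of "[]"] by (simp add: closure_Times)

lemma kernel_bound_nonneg: "0 \<le> Mk"
  using kernel_bound nonempty_dom closure_subset by (metis abs_ge_zero all_not_in_conv order_trans subsetD)

lemma kernel_sections:
  assumes "x \<in> \<Omega>"
  shows "Cq \<Omega> q (\<lambda>z. k (x, z))" "pds_bounded \<Omega> q (\<lambda>z. k (x, z)) Mk"
    and "Cq \<Omega> q (\<lambda>z. k (z, x))" "pds_bounded \<Omega> q (\<lambda>z. k (z, x)) Mk"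
proof -
  have L: "(\<lambda>b. (0, b)) ` Basis \<subseteq> (Basis :: ('a \<times> 'a) set)"
    "(\<lambda>b. (b, 0)) ` Basis \<subseteq> (Basis :: ('a \<times> 'a) set)"
    by (auto simp: Basis_prod_def)
  have p: "(\<lambda>z. (x, z)) ` \<Omega> \<subseteq> \<Omega> \<times> \<Omega>" "(\<lambda>z. (z, x)) ` \<Omega> \<subseteq> \<Omega> \<times> \<Omega>" using assms by auto
  have line: "(x, z + t *\<^sub>R b) = (x, z) + t *\<^sub>R (0, b)" "(z + t *\<^sub>R b, x) = (z, x) + t *\<^sub>R (b, 0)"
    for z b :: 'a and t :: real
    by simp_all
  have cont: "continuous_on (closure \<Omega>) (\<lambda>z. (x, z))" "continuous_on (closure \<Omega>) (\<lambda>z. (z, x))"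
    by (intro continuous_intros)+
  show "Cq \<Omega> q (\<lambda>z. k (x, z))"
    by (rule Cq_compose_affine[OF open_dom line(1) p(1) cont(1) L(1) kernel_Cq])
  show "pds_bounded \<Omega> q (\<lambda>z. k (x, z)) Mk"
    by (rule pds_bounded_compose_affine[OF open_dom line(1) p(1) L(1) kernel_Cq kernel_pds_bounded])
  show "Cq \<Omega> q (\<lambda>z. k (z, x))"
    by (rule Cq_compose_affine[OF open_dom line(2) p(2) cont(2) L(2) kernel_Cq])
  show "pds_bounded \<Omega> q (\<lambda>z. k (z, x)) Mk"
    by (rule pds_bounded_compose_affine[OF open_dom line(2) p(2) L(2) kernel_Cq kernel_pds_bounded])
qed

definition kernel_quad_error :: "nat \<Rightarrow> (nat \<Rightarrow> 'a) \<Rightarrow> (nat \<Rightarrow> real) \<Rightarrow> 'a \<Rightarrow> 'a \<Rightarrow> real" where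
  "kernel_quad_error n yy ww x y =
     integral \<Omega> (\<lambda>z. k (x, z) * k (z, y)) - (\<Sum>i<n. ww i * (k (x, yy i) * k (yy i, y)))"

definition nys_interp :: "nat \<Rightarrow> (nat \<Rightarrow> 'a) \<Rightarrow> (nat \<Rightarrow> real) \<Rightarrow> (nat \<Rightarrow> real) \<Rightarrow> 'a \<Rightarrow> real" where
  "nys_interp n yy ww v x = (\<Sum>j<n. ww j * k (x, yy j) * v j)"

lemma continuous_on_nys_interp:
  "\<forall>i<n. yy i \<in> closure \<Omega> \<Longrightarrow> continuous_on (closure \<Omega>) (nys_interp n yy ww v)"
  unfolding nys_interp_def
  by (intro continuous_intros continuous_on_compose2[OF kernel_continuous]) auto

lemma continuous_on_kernel_quad_error:
  assumes "\<forall>i<n. yy i \<in> closure \<Omega>"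
  shows "continuous_on (closure \<Omega> \<times> closure \<Omega>) (\<lambda>(x, y). kernel_quad_error n yy ww x y)"
proof -
  have "continuous_on ((closure \<Omega> \<times> closure \<Omega>) \<times> closure \<Omega>) (\<lambda>(p, z). k (fst p, z) * k (z, snd p))"
    unfolding case_prod_beta'
    by (intro continuous_on_mult continuous_on_compose2[OF kernel_continuous] continuous_intros) auto
  from continuous_on_integral_param[OF bounded_dom open_dom this]
  have "continuous_on (closure \<Omega> \<times> closure \<Omega>) (\<lambda>p. integral \<Omega> (\<lambda>z. k (fst p, z) * k (z, snd p)))"
    by simp
  moreover have "continuous_on (closure \<Omega> \<times> closure \<Omega>)
      (\<lambda>p. \<Sum>i<n. ww i * (k (fst p, yy i) * k (yy i, snd p)))"
    using assms by (intro continuous_intros continuous_on_compose2[OF kernel_continuous]) auto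
  ultimately show ?thesis
    unfolding kernel_quad_error_def case_prod_beta' by (rule continuous_on_diff)
qed

lemma kernel_quad_error_le:
  assumes quad: "quad_error_le \<Omega> q n yy ww \<epsilon>" "0 \<le> \<epsilon>" and yy: "\<forall>i<n. yy i \<in> closure \<Omega>"
    and xy: "x \<in> closure \<Omega>" "y \<in> closure \<Omega>"
  shows "\<bar>kernel_quad_error n yy ww x y\<bar> \<le> \<epsilon> * (real (card (multi_idx q :: ('a \<Rightarrow> nat) set)) * 2 ^ q * Mk * Mk)"
proof -
  let ?B = "\<epsilon> * (real (card (multi_idx q :: ('a \<Rightarrow> nat) set)) * 2 ^ q * Mk * Mk)"
  have "\<bar>kernel_quad_error n yy ww x y\<bar> \<le> ?B" if "x \<in> \<Omega>" "y \<in> \<Omega>" for x y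
    using quad_error_le_mult[OF quad open_dom nonempty_dom kernel_sections(1,2)[OF that(1)]
        kernel_sections(3,4)[OF that(2)]]
    unfolding kernel_quad_error_def by (simp add: mult_ac)
  then have "norm ((\<lambda>(x, y). kernel_quad_error n yy ww x y) (x, y)) \<le> ?B"
    using continuous_on_kernel_quad_error[OF yy] xy
    by (intro continuous_on_closure_norm_le[of "\<Omega> \<times> \<Omega>"]) (auto simp: closure_Times)
  then show ?thesis by simp
qed

lemma Kop_quad_error_le:
  assumes quad: "quad_error_le \<Omega> q n yy ww \<epsilon>" "0 \<le> \<epsilon>" and yy: "\<forall>i<n. yy i \<in> closure \<Omega>"
    and u: "Cq \<Omega> q u" and x: "x \<in> closure \<Omega>"
  shows "\<bar>Kop \<Omega> k u x - nys_interp n yy ww (\<lambda>i. u (yy i)) x\<bar>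
    \<le> \<epsilon> * (real (card (multi_idx q :: ('a \<Rightarrow> nat) set)) * 2 ^ q * Mk * fact q ^ DIM('a) * Cq_norm \<Omega> q u)"
proof -
  let ?T = "\<lambda>x. Kop \<Omega> k u x - nys_interp n yy ww (\<lambda>i. u (yy i)) x"
  have "continuous_on (closure \<Omega>) u" using u by (simp add: Cq_alt)
  then have "continuous_on (closure \<Omega>) ?T"
    using yy by (intro continuous_on_diff continuous_on_Kop[OF bounded_dom open_dom kernel_continuous]
      continuous_on_nys_interp)
  moreover have "\<forall>x\<in>\<Omega>. norm (?T x) \<le> \<epsilon> * (real (card (multi_idx q :: ('a \<Rightarrow> nat) set)) * 2 ^ q * Mk * fact q ^ DIM('a) * Cq_norm \<Omega> q u)"
  proof
    fix x assume "x \<in> \<Omega>"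
    from quad_error_le_mult[OF quad open_dom nonempty_dom kernel_sections(1,2)[OF this] u
        pds_bounded_Cq_norm[OF open_dom bounded_dom nonempty_dom u]]
    show "norm (?T x) \<le> \<epsilon> * (real (card (multi_idx q :: ('a \<Rightarrow> nat) set)) * 2 ^ q * Mk * fact q ^ DIM('a) * Cq_norm \<Omega> q u)"
      unfolding Kop_def nys_interp_def by (simp add: mult_ac)
  qed
  ultimately show ?thesis using continuous_on_closure_norm_le x by fastforce
qed

lemma Kop_nys_interp:
  assumes yy: "\<forall>i<n. yy i \<in> closure \<Omega>" and x: "x \<in> closure \<Omega>"
  shows "Kop \<Omega> k (nys_interp n yy ww v) x = (\<Sum>j<n. ww j * v j * integral \<Omega> (\<lambda>z. k (x, z) * k (z, yy j)))"
proof -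
  have int: "(\<lambda>z. k (x, z) * k (z, yy j)) integrable_on \<Omega>" if "j < n" for j
    using yy x that by (intro integrable_continuous_closure[OF bounded_dom open_dom] continuous_on_mult
        continuous_on_compose2[OF kernel_continuous] continuous_intros) auto
  have "integral \<Omega> (\<lambda>z. \<Sum>j<n. ww j * v j * (k (x, z) * k (z, yy j)))
      = (\<Sum>j<n. integral \<Omega> (\<lambda>z. ww j * v j * (k (x, z) * k (z, yy j))))"
    by (intro integral_sum) (use integrable_on_cmult_left[OF int] in auto)
  then show ?thesis unfolding Kop_def nys_interp_def by (simp add: sum_distrib_left mult_ac)
qed

lemma nys_interp_residual:
  assumes yy: "\<forall>i<n. yy i \<in> closure \<Omega>" and sol: "\<forall>i<n. lam * v i - nys_interp n yy ww v (yy i) = g i"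
    and x: "x \<in> closure \<Omega>"
  shows "lam * nys_interp n yy ww v x - Kop \<Omega> k (nys_interp n yy ww v) x =
    nys_interp n yy ww g x - (\<Sum>j<n. ww j * v j * kernel_quad_error n yy ww x (yy j))"
proof -
  define D where "D = (\<Sum>i<n. ww i * v i * (\<Sum>j<n. ww j * (k (x, yy j) * k (yy j, yy i))))"
  have lv: "lam * v j = g j + nys_interp n yy ww v (yy j)" if "j < n" for j
    using sol that by (simp add: algebra_simps)
  have "lam * nys_interp n yy ww v x = (\<Sum>j<n. ww j * k (x, yy j) * (lam * v j))"
    unfolding nys_interp_def by (simp add: sum_distrib_left mult_ac)
  also have "\<dots> = nys_interp n yy ww g x + (\<Sum>j<n. ww j * k (x, yy j) * nys_interp n yy ww v (yy j))"
    unfolding nys_interp_def[of n yy ww g] sum.distrib[symmetric]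
    using lv by (intro sum.cong) (simp_all add: distrib_left)
  also have "(\<Sum>j<n. ww j * k (x, yy j) * nys_interp n yy ww v (yy j))
      = (\<Sum>j<n. \<Sum>i<n. ww j * k (x, yy j) * (ww i * k (yy j, yy i) * v i))"
    unfolding nys_interp_def by (simp add: sum_distrib_left)
  also have "\<dots> = (\<Sum>i<n. \<Sum>j<n. ww j * k (x, yy j) * (ww i * k (yy j, yy i) * v i))"
    by (rule sum.swap)
  also have "\<dots> = D"
    unfolding D_def by (intro sum.cong refl) (simp add: sum_distrib_left mult_ac)
  finally have "lam * nys_interp n yy ww v x = nys_interp n yy ww g x + D" .
  moreover have "ww j * v j * integral \<Omega> (\<lambda>z. k (x, z) * k (z, yy j)) =
      ww j * v j * (\<Sum>i<n. ww i * (k (x, yy i) * k (yy i, yy j))) +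
      ww j * v j * kernel_quad_error n yy ww x (yy j)" for j
    unfolding kernel_quad_error_def by (simp add: algebra_simps)
  then have "Kop \<Omega> k (nys_interp n yy ww v) x = D + (\<Sum>j<n. ww j * v j * kernel_quad_error n yy ww x (yy j))"
    unfolding Kop_nys_interp[OF yy x] D_def by (simp add: sum.distrib)
  ultimately show ?thesis by simp
qed

lemma sup_norm_nys_interp_le:
  assumes yy: "\<forall>i<n. yy i \<in> closure \<Omega>" and W: "(\<Sum>i<n. \<bar>ww i\<bar>) \<le> W"
    and E: "\<And>x y. x \<in> closure \<Omega> \<Longrightarrow> y \<in> closure \<Omega> \<Longrightarrow> \<bar>kernel_quad_error n yy ww x y\<bar> \<le> e"
    and sol: "\<forall>i<n. lam * v i - nys_interp n yy ww v (yy i) = g i"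
    and G: "\<And>i. i < n \<Longrightarrow> \<bar>g i\<bar> \<le> G" "0 \<le> G" and V: "\<And>i. i < n \<Longrightarrow> \<bar>v i\<bar> \<le> V" "0 \<le> V"
    and "0 \<le> e"
  shows "sup_norm \<Omega> (nys_interp n yy ww v) \<le> Cs * (W * (Mk * G) + W * (V * e))"
proof -
  have "\<bar>lam * nys_interp n yy ww v x - Kop \<Omega> k (nys_interp n yy ww v) x\<bar> \<le> W * (Mk * G) + W * (V * e)"
    if x: "x \<in> closure \<Omega>" for x
  proof -
    have "\<bar>nys_interp n yy ww g x\<bar> \<le> W * (Mk * G)"
      unfolding nys_interp_def mult.assoc using kernel_bound[OF x] yy G kernel_bound_nonneg
      by (intro abs_sum_mult_le[OF W]) (auto simp: abs_mult intro: mult_mono)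
    moreover have "\<bar>\<Sum>j<n. ww j * v j * kernel_quad_error n yy ww x (yy j)\<bar> \<le> W * (V * e)"
      unfolding mult.assoc using E[OF x] yy V \<open>0 \<le> e\<close>
      by (intro abs_sum_mult_le[OF W]) (auto simp: abs_mult intro: mult_mono)
    ultimately show ?thesis unfolding nys_interp_residual[OF yy sol x] by linarith
  qed
  then have "sup_norm \<Omega> (\<lambda>x. lam * nys_interp n yy ww v x - Kop \<Omega> k (nys_interp n yy ww v) x)
      \<le> W * (Mk * G) + W * (V * e)"
    by (rule sup_norm_le[OF nonempty_dom])
  with resolvent_bound[OF continuous_on_nys_interp[OF yy]] resolvent_nonneg show ?thesis
    by (meson mult_left_mono order_trans)
qed

lemma nystrom_stable:
  assumes yy: "\<forall>i<n. yy i \<in> closure \<Omega>" and W: "(\<Sum>i<n. \<bar>ww i\<bar>) \<le> W"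
    and E: "\<And>x y. x \<in> closure \<Omega> \<Longrightarrow> y \<in> closure \<Omega> \<Longrightarrow> \<bar>kernel_quad_error n yy ww x y\<bar> \<le> e"
    and "0 \<le> e" and small: "Cs * W * e \<le> \<bar>lam\<bar> / 2"
  shows "stable_system n (nys_mat lam k yy ww) (2 * (1 + Cs * Mk * W) / \<bar>lam\<bar>)"
  unfolding stable_system_def
proof (intro allI impI)
  fix v g G i
  assume sys: "\<forall>i<n. (\<Sum>j<n. nys_mat lam k yy ww i j * v j) = g i" and G: "\<forall>i<n. \<bar>g i\<bar> \<le> G"
    and i: "i < n"
  define V where "V = Max ((\<lambda>i. \<bar>v i\<bar>) ` {..<n})"
  have V: "\<And>i. i < n \<Longrightarrow> \<bar>v i\<bar> \<le> V" unfolding V_def by (intro Max_ge) auto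
  have "V \<in> (\<lambda>i. \<bar>v i\<bar>) ` {..<n}" unfolding V_def using i by (intro Max_in) auto
  then obtain i0 where i0: "i0 < n" "V = \<bar>v i0\<bar>" by auto
  have G': "\<And>i. i < n \<Longrightarrow> \<bar>g i\<bar> \<le> G" using G by blast
  have "0 \<le> G" "0 \<le> V" using G' V i by (meson abs_ge_zero order_trans)+
  have sol: "\<forall>i<n. lam * v i - nys_interp n yy ww v (yy i) = g i"
    using sys nys_mat_row unfolding nys_interp_def by metis
  have "\<bar>lam\<bar> * V = \<bar>g i0 + nys_interp n yy ww v (yy i0)\<bar>"
    using sol i0 by (simp add: abs_mult[symmetric] algebra_simps)
  also have "\<dots> \<le> G + sup_norm \<Omega> (nys_interp n yy ww v)"
    using G' i0 yy abs_le_sup_norm[OF bounded_dom continuous_on_nys_interp[OF yy]]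
    by (intro order_trans[OF abs_triangle_ineq] add_mono) auto
  also have "\<dots> \<le> G + Cs * (W * (Mk * G) + W * (V * e))"
    using sup_norm_nys_interp_le[OF yy W E sol G' \<open>0 \<le> G\<close> V \<open>0 \<le> V\<close> \<open>0 \<le> e\<close>] by simp
  finally have "\<bar>lam\<bar> * V \<le> (1 + Cs * Mk * W) * G + (Cs * W * e) * V"
    by (simp add: algebra_simps)
  moreover have "(Cs * W * e) * V \<le> \<bar>lam\<bar> / 2 * V" using small \<open>0 \<le> V\<close> by (rule mult_right_mono)
  ultimately have "V \<le> 2 * (1 + Cs * Mk * W) / \<bar>lam\<bar> * G"
    using lam_nonzero by (simp add: field_simps)
  with V[OF i] show "\<bar>v i\<bar> \<le> 2 * (1 + Cs * Mk * W) / \<bar>lam\<bar> * G" by linarith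
qed

lemma nystrom_error:
  assumes yy: "\<forall>i<n. yy i \<in> closure \<Omega>" and W: "(\<Sum>i<n. \<bar>ww i\<bar>) \<le> W"
    and stable: "stable_system n (nys_mat lam k yy ww) D" "0 \<le> D"
    and u: "\<forall>x\<in>closure \<Omega>. lam * u x - Kop \<Omega> k u x = f x"
    and consistent: "\<And>x. x \<in> closure \<Omega> \<Longrightarrow> \<bar>Kop \<Omega> k u x - nys_interp n yy ww (\<lambda>i. u (yy i)) x\<bar> \<le> X"
    and sol: "\<forall>i<n. lam * uh i - nys_interp n yy ww uh (yy i) = f (yy i)"
    and x: "x \<in> closure \<Omega>"
  shows "\<bar>u x - 1 / lam * (nys_interp n yy ww uh x + f x)\<bar> \<le> (1 + W * Mk * D) * X / \<bar>lam\<bar>"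
proof -
  have "0 \<le> X" using consistent[OF x] by linarith
  define err where "err = (\<lambda>i. u (yy i) - uh i)"
  have "(\<Sum>j<n. nys_mat lam k yy ww i j * err j) =
      Kop \<Omega> k u (yy i) - nys_interp n yy ww (\<lambda>i. u (yy i)) (yy i)" if "i < n" for i
    using sol u yy that unfolding nys_mat_row[OF that] err_def nys_interp_def
    by (simp add: algebra_simps sum_subtractf)
  then have err: "\<bar>err i\<bar> \<le> D * X" if "i < n" for i
    using consistent yy that by (intro stable_systemD[OF stable(1)]) auto
  have "lam * (u x - 1 / lam * (nys_interp n yy ww uh x + f x)) =
      (Kop \<Omega> k u x - nys_interp n yy ww (\<lambda>i. u (yy i)) x) + nys_interp n yy ww err x"
    using u x lam_nonzero unfolding err_def nys_interp_def by (simp add: algebra_simps sum_subtractf)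
  moreover have "\<bar>nys_interp n yy ww err x\<bar> \<le> W * (Mk * (D * X))"
    unfolding nys_interp_def mult.assoc
    using kernel_bound[OF x] yy err stable(2) \<open>0 \<le> X\<close> kernel_bound_nonneg
    by (intro abs_sum_mult_le[OF W]) (auto simp: abs_mult intro!: mult_mono)
  ultimately have "\<bar>lam\<bar> * \<bar>u x - 1 / lam * (nys_interp n yy ww uh x + f x)\<bar> \<le> (1 + W * Mk * D) * X"
    using consistent[OF x] unfolding abs_mult[symmetric] by (simp add: algebra_simps abs_triangle_ineq)
  then show ?thesis using lam_nonzero by (simp add: field_simps)
qed

definition admissible_rule :: "real \<Rightarrow> real \<Rightarrow> nat \<Rightarrow> (nat \<Rightarrow> 'a) \<Rightarrow> (nat \<Rightarrow> real) \<Rightarrow> bool" where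
  "admissible_rule W \<epsilon> n yy ww \<longleftrightarrow> 0 < n \<and> (\<forall>i<n. yy i \<in> closure \<Omega>) \<and> (\<Sum>i<n. \<bar>ww i\<bar>) \<le> W \<and>
     quad_error_le \<Omega> q n yy ww \<epsilon> \<and> 0 \<le> \<epsilon>"

lemma nystrom_stable_small_error:
  assumes "0 \<le> W"
  obtains \<delta> where "0 < \<delta>" "\<And>n yy ww \<epsilon>. admissible_rule W \<epsilon> n yy ww \<Longrightarrow> \<epsilon> \<le> \<delta> \<Longrightarrow>
    stable_system n (nys_mat lam k yy ww) (2 * (1 + Cs * Mk * W) / \<bar>lam\<bar>)"
proof
  let ?Ckk = "real (card (multi_idx q :: ('a \<Rightarrow> nat) set)) * 2 ^ q * Mk * Mk"
  define K where "K = Cs * W * ?Ckk"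
  have "0 \<le> ?Ckk" using kernel_bound_nonneg by simp
  then have "0 \<le> K" unfolding K_def using assms resolvent_nonneg by simp
  then show "0 < \<bar>lam\<bar> / (2 * (K + 1))" using lam_nonzero by simp
  fix n yy ww \<epsilon> assume rule: "admissible_rule W \<epsilon> n yy ww" and small: "\<epsilon> \<le> \<bar>lam\<bar> / (2 * (K + 1))"
  then have yy: "\<forall>i<n. yy i \<in> closure \<Omega>" and W: "(\<Sum>i<n. \<bar>ww i\<bar>) \<le> W"
    and quad: "quad_error_le \<Omega> q n yy ww \<epsilon>" "0 \<le> \<epsilon>"
    unfolding admissible_rule_def by auto
  have "K * \<epsilon> \<le> (K + 1) * \<epsilon>" using quad(2) by (simp add: algebra_simps)
  also have "\<dots> \<le> (K + 1) * (\<bar>lam\<bar> / (2 * (K + 1)))"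
    using small \<open>0 \<le> K\<close> by (intro mult_left_mono) auto
  also have "\<dots> = \<bar>lam\<bar> / 2" using \<open>0 \<le> K\<close> by (simp add: field_simps)
  finally have "Cs * W * (\<epsilon> * ?Ckk) \<le> \<bar>lam\<bar> / 2" unfolding K_def by (simp add: mult_ac)
  from nystrom_stable[OF yy W kernel_quad_error_le[OF quad yy] _ this]
  show "stable_system n (nys_mat lam k yy ww) (2 * (1 + Cs * Mk * W) / \<bar>lam\<bar>)"
    using quad(2) \<open>0 \<le> ?Ckk\<close> by simp
qed

lemma nystrom_sup_norm_error_le:
  assumes rule: "admissible_rule W \<epsilon> n yy ww" and stable: "stable_system n (nys_mat lam k yy ww) D" "0 \<le> D"
    and u: "Cq \<Omega> q u" "\<forall>x\<in>closure \<Omega>. lam * u x - Kop \<Omega> k u x = f x"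
    and sol: "\<forall>i<n. lam * uh i - (\<Sum>j<n. ww j * k (yy i, yy j) * uh j) = f (yy i)"
  shows "sup_norm \<Omega> (\<lambda>x. u x - 1 / lam * ((\<Sum>i<n. ww i * k (x, yy i) * uh i) + f x))
    \<le> (1 + W * Mk * D) * (real (card (multi_idx q :: ('a \<Rightarrow> nat) set)) * 2 ^ q * Mk * fact q ^ DIM('a))
        / \<bar>lam\<bar> * \<epsilon> * Cq_norm \<Omega> q u"
proof (rule sup_norm_le[OF nonempty_dom])
  fix x assume x: "x \<in> closure \<Omega>"
  have yy: "\<forall>i<n. yy i \<in> closure \<Omega>" and W: "(\<Sum>i<n. \<bar>ww i\<bar>) \<le> W"
    and quad: "quad_error_le \<Omega> q n yy ww \<epsilon>" "0 \<le> \<epsilon>"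
    using rule unfolding admissible_rule_def by auto
  from nystrom_error[OF yy W stable u(2) Kop_quad_error_le[OF quad yy u(1)] _ x] sol
  show "\<bar>u x - 1 / lam * ((\<Sum>i<n. ww i * k (x, yy i) * uh i) + f x)\<bar>
    \<le> (1 + W * Mk * D) * (real (card (multi_idx q :: ('a \<Rightarrow> nat) set)) * 2 ^ q * Mk * fact q ^ DIM('a))
        / \<bar>lam\<bar> * \<epsilon> * Cq_norm \<Omega> q u"
    unfolding nys_interp_def by (simp add: mult_ac)
qed

lemma cond_inf_nys_mat_le:
  assumes "admissible_rule W \<epsilon> n yy ww" "stable_system n (nys_mat lam k yy ww) D"
  shows "cond_inf n (nys_mat lam k yy ww) \<le> (\<bar>lam\<bar> + Mk * W) * D"
proof -
  have n: "0 < n" and yy: "\<forall>i<n. yy i \<in> closure \<Omega>" and W: "(\<Sum>i<n. \<bar>ww i\<bar>) \<le> W"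
    using assms(1) unfolding admissible_rule_def by auto
  show ?thesis
    using yy kernel_bound by (intro cond_inf_le[OF assms(2) n] nys_mat_row_abs_le[OF _ _ W]) auto
qed

lemma nys_system_unique_solution:
  assumes "stable_system n (nys_mat lam k yy ww) D"
  shows "\<exists>uh. (\<forall>i<n. lam * uh i - (\<Sum>j<n. ww j * k (yy i, yy j) * uh j) = g i) \<and>
    (\<forall>uh'. (\<forall>i<n. lam * uh' i - (\<Sum>j<n. ww j * k (yy i, yy j) * uh' j) = g i) \<longrightarrow> (\<forall>i<n. uh' i = uh i))"
  using stable_system_unique_solution[OF assms, of g] by (simp add: nys_mat_row)

lemma nystrom_rule_estimates:
  assumes rule: "admissible_rule W (Cw * t) n yy ww" "0 \<le> t"
    and stable: "stable_system n (nys_mat lam k yy ww) D" "0 \<le> D"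
    and C: "(1 + W * Mk * D) * (real (card (multi_idx q :: ('a \<Rightarrow> nat) set)) * 2 ^ q * Mk * fact q ^ DIM('a))
      / \<bar>lam\<bar> * Cw \<le> C" (is "?Cerr * Cw \<le> C")
  shows "cond_inf n (\<lambda>i j. nys_mat lam k yy ww i j) \<le> (\<bar>lam\<bar> + Mk * W) * D \<and>
    (\<forall>f u. Cq \<Omega> q f \<and> (\<exists>x\<in>closure \<Omega>. f x \<noteq> 0) \<and> Cq \<Omega> q u \<and>
        (\<forall>x\<in>closure \<Omega>. lam * u x - Kop \<Omega> k u x = f x) \<longrightarrow>
      (\<exists>uh. (\<forall>i<n. lam * uh i - (\<Sum>j<n. ww j * k (yy i, yy j) * uh j) = f (yy i)) \<and>
         (\<forall>uh'. (\<forall>i<n. lam * uh' i - (\<Sum>j<n. ww j * k (yy i, yy j) * uh' j) = f (yy i))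
            \<longrightarrow> (\<forall>i<n. uh' i = uh i))) \<and>
      (\<forall>uh. (\<forall>i<n. lam * uh i - (\<Sum>j<n. ww j * k (yy i, yy j) * uh j) = f (yy i)) \<longrightarrow>
         sup_norm \<Omega> (\<lambda>x. u x - (1 / lam) * ((\<Sum>i<n. ww i * k (x, yy i) * uh i) + f x))
           \<le> C * t * Cq_norm \<Omega> q u))"
proof (intro conjI allI impI)
  show "cond_inf n (\<lambda>i j. nys_mat lam k yy ww i j) \<le> (\<bar>lam\<bar> + Mk * W) * D"
    using cond_inf_nys_mat_le[OF rule(1) stable(1)] by simp
  fix f u assume fu: "Cq \<Omega> q f \<and> (\<exists>x\<in>closure \<Omega>. f x \<noteq> 0) \<and> Cq \<Omega> q u \<and>
    (\<forall>x\<in>closure \<Omega>. lam * u x - Kop \<Omega> k u x = f x)"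
  then have u: "Cq \<Omega> q u" "\<forall>x\<in>closure \<Omega>. lam * u x - Kop \<Omega> k u x = f x" by auto
  show "\<exists>uh. (\<forall>i<n. lam * uh i - (\<Sum>j<n. ww j * k (yy i, yy j) * uh j) = f (yy i)) \<and>
    (\<forall>uh'. (\<forall>i<n. lam * uh' i - (\<Sum>j<n. ww j * k (yy i, yy j) * uh' j) = f (yy i))
      \<longrightarrow> (\<forall>i<n. uh' i = uh i))"
    by (rule nys_system_unique_solution[OF stable(1)])
  fix uh assume sol: "\<forall>i<n. lam * uh i - (\<Sum>j<n. ww j * k (yy i, yy j) * uh j) = f (yy i)"
  have "sup_norm \<Omega> (\<lambda>x. u x - (1 / lam) * ((\<Sum>i<n. ww i * k (x, yy i) * uh i) + f x))
      \<le> ?Cerr * (Cw * t) * Cq_norm \<Omega> q u"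
    by (rule nystrom_sup_norm_error_le[OF rule(1) stable u sol])
  also have "\<dots> = ?Cerr * Cw * (t * Cq_norm \<Omega> q u)" by (simp add: mult_ac)
  also have "\<dots> \<le> C * (t * Cq_norm \<Omega> q u)"
    using C rule(2) Cq_norm_nonneg[OF bounded_dom nonempty_dom u(1)] by (intro mult_right_mono) auto
  finally show "sup_norm \<Omega> (\<lambda>x. u x - (1 / lam) * ((\<Sum>i<n. ww i * k (x, yy i) * uh i) + f x))
      \<le> C * t * Cq_norm \<Omega> q u"
    by (simp add: mult.assoc)
qed

lemma quad_scheme_admissible:
  assumes "quad_scheme \<Omega> N y" "\<And>h. 0 < h \<Longrightarrow> (\<Sum>i<N h. \<bar>w h i\<bar>) \<le> W"
    and "0 < Cw" "\<And>h. 0 < h \<Longrightarrow> quad_error_le \<Omega> q (N h) (y h) (w h) (Cw * h ^ q)"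
    and "0 < h" "0 < N h"
  shows "admissible_rule W (Cw * h ^ q) (N h) (y h) (w h)"
proof -
  have "\<forall>i<N h. y h i \<in> closure \<Omega>" using assms(1,5) unfolding quad_scheme_def by blast
  moreover have "0 \<le> Cw * h ^ q" using assms(3,5) by simp
  ultimately show ?thesis using assms(2,4-6) unfolding admissible_rule_def by simp
qed

lemma nystrom_scheme_estimates:
  assumes scheme: "quad_scheme \<Omega> N y" and order: "quad_order \<Omega> q N y w" and stab: "quad_stable N w"
    and "1 \<le> q"
  shows "\<exists>h0>0. \<exists>C\<kappa> C. C > 0 \<and> (\<forall>h. 0 < h \<and> h < h0 \<longrightarrow>
      cond_inf (N h) (\<lambda>i j. nys_mat lam k (y h) (w h) i j) \<le> C\<kappa> \<and>
      (\<forall>f u. Cq \<Omega> q f \<and> (\<exists>x\<in>closure \<Omega>. f x \<noteq> 0) \<and> Cq \<Omega> q u \<and>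
          (\<forall>x\<in>closure \<Omega>. lam * u x - Kop \<Omega> k u x = f x) \<longrightarrow>
        (\<exists>uh. (\<forall>i<N h. lam * uh i - (\<Sum>j<N h. w h j * k (y h i, y h j) * uh j) = f (y h i)) \<and>
           (\<forall>uh'. (\<forall>i<N h. lam * uh' i - (\<Sum>j<N h. w h j * k (y h i, y h j) * uh' j) = f (y h i))
              \<longrightarrow> (\<forall>i<N h. uh' i = uh i))) \<and>
        (\<forall>uh. (\<forall>i<N h. lam * uh i - (\<Sum>j<N h. w h j * k (y h i, y h j) * uh j) = f (y h i)) \<longrightarrow>
           sup_norm \<Omega> (\<lambda>x. u x - (1 / lam) * ((\<Sum>i<N h. w h i * k (x, y h i) * uh i) + f x))
             \<le> C * h ^ q * Cq_norm \<Omega> q u)))"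
    (is "\<exists>h0>0. \<exists>C\<kappa> C. C > 0 \<and> (\<forall>h. 0 < h \<and> h < h0 \<longrightarrow> ?P h C\<kappa> C)")
proof -
  obtain W where W: "\<And>h. 0 < h \<Longrightarrow> (\<Sum>i<N h. \<bar>w h i\<bar>) \<le> W" using stab unfolding quad_stable_def by blast
  have "0 \<le> (\<Sum>i<N 1. \<bar>w 1 i\<bar>)" by (simp add: sum_nonneg)
  then have "0 \<le> W" using W[of 1] by linarith
  obtain Cw where "0 < Cw" and Cw: "\<And>h. 0 < h \<Longrightarrow> quad_error_le \<Omega> q (N h) (y h) (w h) (Cw * h ^ q)"
    using quad_order_error_le[OF order bounded_dom nonempty_dom] by blast
  define D where "D = 2 * (1 + Cs * Mk * W) / \<bar>lam\<bar>"
  have "0 \<le> D" unfolding D_def using \<open>0 \<le> W\<close> resolvent_nonneg kernel_bound_nonneg by simp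
  obtain \<delta> where "0 < \<delta>" and "\<And>n yy ww \<epsilon>. admissible_rule W \<epsilon> n yy ww \<Longrightarrow> \<epsilon> \<le> \<delta> \<Longrightarrow>
      stable_system n (nys_mat lam k yy ww) (2 * (1 + Cs * Mk * W) / \<bar>lam\<bar>)"
    by (rule nystrom_stable_small_error[OF \<open>0 \<le> W\<close>]) blast
  note stable = this(2)[folded D_def]
  obtain h0 where "0 < h0" and small: "\<And>h. 0 < h \<Longrightarrow> h < h0 \<Longrightarrow> 0 < N h \<and> Cw * h ^ q \<le> \<delta>"
    using quad_scheme_eventually_small[OF scheme \<open>1 \<le> q\<close> \<open>0 < \<delta>\<close>] by blast
  have rule: "admissible_rule W (Cw * h ^ q) (N h) (y h) (w h)" "Cw * h ^ q \<le> \<delta>" "0 \<le> h ^ q"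
    if "0 < h" "h < h0" for h
    using quad_scheme_admissible[OF scheme W \<open>0 < Cw\<close> Cw that(1)] small[OF that] that(1) by auto
  define C where "C = max 1 ((1 + W * Mk * D) *
    (real (card (multi_idx q :: ('a \<Rightarrow> nat) set)) * 2 ^ q * Mk * fact q ^ DIM('a)) / \<bar>lam\<bar> * Cw)"
  have "0 < C" unfolding C_def by simp
  have all: "\<forall>h. 0 < h \<and> h < h0 \<longrightarrow> ?P h ((\<bar>lam\<bar> + Mk * W) * D) C"
  proof (intro allI impI)
    fix h assume "0 < h \<and> h < h0"
    then have h: "0 < h" "h < h0" by auto
    show "?P h ((\<bar>lam\<bar> + Mk * W) * D) C" unfolding C_def
      by (rule nystrom_rule_estimates[OF rule(1,3)[OF h] stable[OF rule(1,2)[OF h]] \<open>0 \<le> D\<close>]) simp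
  qed
  show ?thesis
    by (rule exI[of _ h0], rule conjI[OF \<open>0 < h0\<close>], rule exI[of _ "(\<bar>lam\<bar> + Mk * W) * D"],
      rule exI[of _ C], rule conjI[OF \<open>0 < C\<close> all])
qed

end

theorem proposition3p3:
  fixes \<Omega> :: "'a::euclidean_space set"
    and q :: nat and lam :: real
    and k :: "'a \<times> 'a \<Rightarrow> real"
    and N :: "real \<Rightarrow> nat" and y :: "real \<Rightarrow> nat \<Rightarrow> 'a" and w :: "real \<Rightarrow> nat \<Rightarrow> real"
  assumes "bounded \<Omega>" and "open \<Omega>"
    and "q \<ge> 1" and "lam \<noteq> 0"
    and "Cq (\<Omega> \<times> \<Omega>) q k"
    and "not_in_spectrum \<Omega> k lam"
    and "quad_scheme \<Omega> N y" and "quad_order \<Omega> q N y w" and "quad_stable N w"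
  shows "\<exists>h0>0. \<exists>C\<kappa> C. C > 0 \<and> (\<forall>h. 0 < h \<and> h < h0 \<longrightarrow>
      cond_inf (N h) (\<lambda>i j. nys_mat lam k (y h) (w h) i j) \<le> C\<kappa> \<and>
      (\<forall>f u. Cq \<Omega> q f \<and> (\<exists>x\<in>closure \<Omega>. f x \<noteq> 0) \<and> Cq \<Omega> q u \<and>
          (\<forall>x\<in>closure \<Omega>. lam * u x - Kop \<Omega> k u x = f x) \<longrightarrow>
        (\<exists>uh. (\<forall>i<N h. lam * uh i - (\<Sum>j<N h. w h j * k (y h i, y h j) * uh j) = f (y h i)) \<and>
           (\<forall>uh'. (\<forall>i<N h. lam * uh' i - (\<Sum>j<N h. w h j * k (y h i, y h j) * uh' j) = f (y h i))
              \<longrightarrow> (\<forall>i<N h. uh' i = uh i))) \<and>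
        (\<forall>uh. (\<forall>i<N h. lam * uh i - (\<Sum>j<N h. w h j * k (y h i, y h j) * uh j) = f (y h i)) \<longrightarrow>
           sup_norm \<Omega> (\<lambda>x. u x - (1 / lam) * ((\<Sum>i<N h. w h i * k (x, y h i) * uh i) + f x))
             \<le> C * h ^ q * Cq_norm \<Omega> q u)))"
proof -
  have \<Omega>: "\<Omega> \<noteq> {}" by (rule quad_scheme_nonempty[OF assms(7)])
  have "continuous_on (closure \<Omega> \<times> closure \<Omega>) k" using assms(5) by (simp add: Cq_alt closure_Times)
  from not_in_spectrum_resolvent_bound[OF assms(6,1,2) \<Omega> this] obtain Cs where "0 \<le> Cs"
    "\<And>v. continuous_on (closure \<Omega>) v \<Longrightarrow> sup_norm \<Omega> v \<le> Cs * sup_norm \<Omega> (\<lambda>x. lam * v x - Kop \<Omega> k v x)"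
    by blast
  moreover obtain Mk where "pds_bounded (\<Omega> \<times> \<Omega>) q k Mk"
    using Cq_pds_bounded[OF bounded_Times[OF assms(1,1)] assms(5)] .
  ultimately interpret nystrom_problem \<Omega> q k lam Cs Mk
    using assms \<Omega> by unfold_locales auto
  show ?thesis by (rule nystrom_scheme_estimates[OF assms(7-9,3)])
qed

end
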